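(* The trace K Lagrangian and the gamma-gamma Lagrangian are related by $$\mathcal{L}_K=\mathcal{L}_\Gamma-\sum_{\mu\neq\nu}\partial_\mu\big(\alpha(\mu\nu)\,\partial_\nu\sqrt{|\gamma(\mu\nu)|}\big)+\sum_{\mu,\nu}\partial_\mu\Big(\sqrt{|g|}\big(\xi(\mu)n^\sigma(\mu)n^\nu(\mu)\Gamma^\mu_{\nu\sigma}-\xi(\nu)n^\sigma(\nu)n^\mu(\nu)\Gamma^\nu_{\nu\sigma}\big)\Big)$$ (summation over $\sigma$), where $\mathcal{L}_\Gamma=\sqrt{|g|}g^{\mu\nu}(\Gamma^\rho_{\mu\sigma}\Gamma^\sigma_{\rho\nu}-\Gamma^\rho_{\mu\nu}\Gamma^\sigma_{\rho\sigma})=\sqrt{|g|}R-\partial_\mu\big(\sqrt{|g|}(\Gamma^\mu_{\nu\sigma}g^{\nu\sigma}-\Gamma^\nu_{\nu\sigma}g^{\sigma\mu})\big)$.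
   Context: Metric $g_{\mu\nu}$ of signature $(-,+,+,+)$, $g=\det g_{\mu\nu}$, coordinates with $g^{00}<0$, $g^{ii}>0$; $\Gamma$ is the Levi-Civita connection. $\xi(\mu)=\eta_{\mu\mu}$, $\eta=\mathrm{diag}(-1,1,1,1)$; $n^\nu(\mu)=\xi(\mu)g^{\mu\nu}/\sqrt{|g^{\mu\mu}|}$. For fixed $\mu$: $\gamma(\mu)=\det(g_{ab})_{a,b\neq\mu}$, $\gamma^{ab}(\mu)=g^{ab}-g^{a\mu}g^{\mu b}/g^{\mu\mu}$, $K_{ab}(\mu)=-\Gamma^\mu_{ab}/\sqrt{|g^{\mu\mu}|}$, $K(\mu)=\gamma^{ab}(\mu)K_{ab}(\mu)$. For $\mu\neq\nu$: $\gamma(\mu\nu)=\det(g_{AB})_{A,B\neq\mu,\nu}$, $q(\mu\nu)=g^{\mu\nu}/\sqrt{\xi(\mu)\xi(\nu)g^{\mu\mu}g^{\nu\nu}}$, $\alpha(0i)=\alpha(i0)=\operatorname{arcsinh}q(0i)$, $\alpha(ij)=\operatorname{arcsin}q(ij)$. $\mathcal{L}_K:=\sqrt{|g|}R+2\sum_\mu\partial_\mu(\sqrt{|\gamma(\mu)|}K(\mu))-\sum_{\mu\neq\nu}\partial_\mu\partial_\nu(\sqrt{|\gamma(\mu\nu)|}\alpha(\mu\nu))$ (sums over ordered pairs). *)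

theory Defs
  imports "HOL-Analysis.Analysis"
begin

text \<open>Coordinates x in real^4, indices of type 4 (0 = time, 1,2,3 = space).
  A metric field is g :: real^4 => real^4^4, with components g x $ mu $ nu = g_{mu nu}(x).\<close>

definition pd :: "4 \<Rightarrow> (real^4 \<Rightarrow> real) \<Rightarrow> real^4 \<Rightarrow> real" where
  "pd i f x = deriv (\<lambda>t. f (x + t *\<^sub>R axis i 1)) 0"

fun pds :: "4 list \<Rightarrow> (real^4 \<Rightarrow> real) \<Rightarrow> real^4 \<Rightarrow> real" where
  "pds [] f = f"
| "pds (k # ks) f = pd k (pds ks f)"

definition smooth_on4 :: "(real^4) set \<Rightarrow> (real^4 \<Rightarrow> real) \<Rightarrow> bool" where
  "smooth_on4 U f \<longleftrightarrow> (\<forall>ks. \<forall>x\<in>U. pds ks f differentiable (at x))"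

definition xi :: "4 \<Rightarrow> real" where
  "xi mu = (if mu = 0 then -1 else 1)"

definition eta :: "real^4^4" where
  "eta = (\<chi> i j. if i = j then xi i else 0)"

definition ginv :: "(real^4 \<Rightarrow> real^4^4) \<Rightarrow> real^4 \<Rightarrow> real^4^4" where
  "ginv g x = matrix_inv (g x)"

definition sqrtg :: "(real^4 \<Rightarrow> real^4^4) \<Rightarrow> real^4 \<Rightarrow> real" where
  "sqrtg g x = sqrt \<bar>det (g x)\<bar>"

definition Chr :: "(real^4 \<Rightarrow> real^4^4) \<Rightarrow> 4 \<Rightarrow> 4 \<Rightarrow> 4 \<Rightarrow> real^4 \<Rightarrow> real" where
  "Chr g l m n x = (1/2) * (\<Sum>r\<in>UNIV. ginv g x $ l $ r *
      (pd m (\<lambda>y. g y $ r $ n) x + pd n (\<lambda>y. g y $ r $ m) x - pd r (\<lambda>y. g y $ m $ n) x))"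

definition Ricci :: "(real^4 \<Rightarrow> real^4^4) \<Rightarrow> 4 \<Rightarrow> 4 \<Rightarrow> real^4 \<Rightarrow> real" where
  "Ricci g m n x = (\<Sum>l\<in>UNIV. pd l (Chr g l m n) x) - (\<Sum>l\<in>UNIV. pd n (Chr g l m l) x)
     + (\<Sum>l\<in>UNIV. \<Sum>s\<in>UNIV. Chr g l l s x * Chr g s m n x - Chr g l n s x * Chr g s m l x)"

definition Rscal :: "(real^4 \<Rightarrow> real^4^4) \<Rightarrow> real^4 \<Rightarrow> real" where
  "Rscal g x = (\<Sum>m\<in>UNIV. \<Sum>n\<in>UNIV. ginv g x $ m $ n * Ricci g m n x)"

definition nvec :: "(real^4 \<Rightarrow> real^4^4) \<Rightarrow> 4 \<Rightarrow> 4 \<Rightarrow> real^4 \<Rightarrow> real" where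
  "nvec g mu nu x = xi mu * ginv g x $ mu $ nu / sqrt \<bar>ginv g x $ mu $ mu\<bar>"

definition subdet :: "real^4^4 \<Rightarrow> 4 set \<Rightarrow> real" where
  "subdet A S = (\<Sum>p\<in>{p. p permutes S}. of_int (sign p) * (\<Prod>i\<in>S. A $ i $ p i))"

definition gam1 :: "(real^4 \<Rightarrow> real^4^4) \<Rightarrow> 4 \<Rightarrow> real^4 \<Rightarrow> real" where
  "gam1 g mu x = subdet (g x) (- {mu})"

definition gam1inv :: "(real^4 \<Rightarrow> real^4^4) \<Rightarrow> 4 \<Rightarrow> 4 \<Rightarrow> 4 \<Rightarrow> real^4 \<Rightarrow> real" where
  "gam1inv g mu a b x = ginv g x $ a $ b - ginv g x $ a $ mu * ginv g x $ mu $ b / ginv g x $ mu $ mu"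

definition Kab :: "(real^4 \<Rightarrow> real^4^4) \<Rightarrow> 4 \<Rightarrow> 4 \<Rightarrow> 4 \<Rightarrow> real^4 \<Rightarrow> real" where
  "Kab g mu a b x = - Chr g mu a b x / sqrt \<bar>ginv g x $ mu $ mu\<bar>"

definition Ktr :: "(real^4 \<Rightarrow> real^4^4) \<Rightarrow> 4 \<Rightarrow> real^4 \<Rightarrow> real" where
  "Ktr g mu x = (\<Sum>a\<in>-{mu}. \<Sum>b\<in>-{mu}. gam1inv g mu a b x * Kab g mu a b x)"

definition gam2 :: "(real^4 \<Rightarrow> real^4^4) \<Rightarrow> 4 \<Rightarrow> 4 \<Rightarrow> real^4 \<Rightarrow> real" where
  "gam2 g mu nu x = subdet (g x) (- {mu, nu})"

definition qq :: "(real^4 \<Rightarrow> real^4^4) \<Rightarrow> 4 \<Rightarrow> 4 \<Rightarrow> real^4 \<Rightarrow> real" where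
  "qq g mu nu x = ginv g x $ mu $ nu /
      sqrt (xi mu * xi nu * ginv g x $ mu $ mu * ginv g x $ nu $ nu)"

definition alpha :: "(real^4 \<Rightarrow> real^4^4) \<Rightarrow> 4 \<Rightarrow> 4 \<Rightarrow> real^4 \<Rightarrow> real" where
  "alpha g mu nu x = (if mu = 0 \<or> nu = 0 then arsinh (qq g mu nu x) else arcsin (qq g mu nu x))"

definition LK :: "(real^4 \<Rightarrow> real^4^4) \<Rightarrow> real^4 \<Rightarrow> real" where
  "LK g x = sqrtg g x * Rscal g x
     + 2 * (\<Sum>mu\<in>UNIV. pd mu (\<lambda>y. sqrt \<bar>gam1 g mu y\<bar> * Ktr g mu y) x)
     - (\<Sum>mu\<in>UNIV. \<Sum>nu\<in>-{mu}. pd mu (pd nu (\<lambda>y. sqrt \<bar>gam2 g mu nu y\<bar> * alpha g mu nu y)) x)"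

definition LGamma :: "(real^4 \<Rightarrow> real^4^4) \<Rightarrow> real^4 \<Rightarrow> real" where
  "LGamma g x = sqrtg g x * (\<Sum>mu\<in>UNIV. \<Sum>nu\<in>UNIV. ginv g x $ mu $ nu *
      (\<Sum>rho\<in>UNIV. \<Sum>sig\<in>UNIV. Chr g rho mu sig x * Chr g sig rho nu x
                                   - Chr g rho mu nu x * Chr g sig rho sig x))"

end

theory Submission
  imports Defs
begin

(*
  Everything is a pointwise identity once each derivative of the metric is rewritten through
  Christoffel symbols: metric compatibility gives d_k g^ab = -(g^ac Gamma^b_kc + g^bc Gamma^a_kc),
  and Jacobi's formula gives d_k sqrt|g| = sqrt|g| Gamma^s_sk.  With these, the second identity
  L_Gamma = sqrt|g| R - d_mu (sqrt|g| V^mu), where V^mu = Gamma^mu_nusig g^nusig - Gamma^nu_nusig g^sigmu,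
  becomes a polynomial identity in g^ab, Gamma and d Gamma that holds after relabelling dummy
  indices.

  For the first identity, Jacobi's complementary minor theorem expresses the minors through the
  inverse metric: gamma(mu) = det g * g^mumu and gamma(mu nu) = det g * (g^mumu g^nunu - (g^munu)^2).
  Then sqrt|gamma(mu nu)| d_nu alpha(mu nu) and sqrt|gamma(mu)| K(mu) are explicit rational
  expressions in g^ab and its derivatives, and comparing them gives, for each mu,
    2 sqrt|gamma(mu)| K(mu) = sum_{nu /= mu} sqrt|gamma(mu nu)| d_nu alpha(mu nu)
                              - sqrt|g| V^mu + sum_nu sqrt|g| W^{mu nu},
  where W^{mu nu} collects the normal-vector terms.  Applying d_mu, splitting
  d_mu d_nu (sqrt|gamma| alpha) by the product rule and summing over mu yields the theorem.
*)

section \<open>Partial derivatives\<close>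

lemma has_real_derivative_along_line:
  fixes f :: "'a::real_normed_vector \<Rightarrow> real"
  assumes "(f has_derivative f') (at x)"
  shows "((\<lambda>t. f (x + t *\<^sub>R v)) has_real_derivative f' v) (at 0)"
proof -
  have "((\<lambda>t. x + t *\<^sub>R v) has_derivative (\<lambda>t. t *\<^sub>R v)) (at 0)"
    by (auto intro!: derivative_eq_intros)
  from has_derivative_compose[OF this, of f f']
  have "((\<lambda>t. f (x + t *\<^sub>R v)) has_derivative (\<lambda>t. f' (t *\<^sub>R v))) (at 0)"
    using assms by simp
  moreover have "(\<lambda>t. f' (t *\<^sub>R v)) = (\<lambda>t. f' v * t)"
    using has_derivative_linear[OF assms] by (simp add: linear_scale mult.commute)
  ultimately show ?thesis by (simp add: has_field_derivative_def)
qed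

lemma pd_eqI: "((\<lambda>t. f (x + t *\<^sub>R axis i 1)) has_real_derivative D) (at 0) \<Longrightarrow> pd i f x = D"
  unfolding pd_def by (rule DERIV_imp_deriv)

lemma pd_has_derivative: "(f has_derivative f') (at x) \<Longrightarrow> pd i f x = f' (axis i 1)"
  by (intro pd_eqI has_real_derivative_along_line)

lemma has_real_derivative_pd:
  assumes "f differentiable (at x)"
  shows "((\<lambda>t. f (x + t *\<^sub>R axis i 1)) has_real_derivative pd i f x) (at 0)"
proof -
  obtain f' where "(f has_derivative f') (at x)"
    using assms by (auto simp: differentiable_def)
  then show ?thesis
    by (simp add: has_real_derivative_along_line pd_has_derivative)
qed

lemma pd_cong_open:
  assumes "open U" "x \<in> U" "\<And>y. y \<in> U \<Longrightarrow> f y = h y"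
  shows "pd i f x = pd i h x"
  unfolding pd_def
proof (rule deriv_cong_ev[OF _ refl])
  have "isCont (\<lambda>t::real. x + t *\<^sub>R axis i 1) 0"
    by (intro continuous_intros)
  then have "\<forall>\<^sub>F t in nhds 0. t \<noteq> 0 \<longrightarrow> x + t *\<^sub>R axis i 1 \<in> U"
    using assms(1,2) by (simp add: isCont_def tendsto_def eventually_at_filter)
  then have "\<forall>\<^sub>F t in nhds 0. x + t *\<^sub>R axis i 1 \<in> U"
    by eventually_elim (use assms(2) in auto)
  then show "\<forall>\<^sub>F t in nhds 0. f (x + t *\<^sub>R axis i 1) = h (x + t *\<^sub>R axis i 1)"
    by eventually_elim (use assms(3) in auto)
qed

lemma pd_const: "pd i (\<lambda>y. c) x = 0"
  by (rule pd_eqI) simp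

lemma pd_add:
  "f differentiable (at x) \<Longrightarrow> h differentiable (at x) \<Longrightarrow>
    pd i (\<lambda>y. f y + h y) x = pd i f x + pd i h x"
  by (intro pd_eqI DERIV_add has_real_derivative_pd)

lemma pd_diff:
  "f differentiable (at x) \<Longrightarrow> h differentiable (at x) \<Longrightarrow>
    pd i (\<lambda>y. f y - h y) x = pd i f x - pd i h x"
  by (intro pd_eqI DERIV_diff has_real_derivative_pd)

lemma pd_cmult: "f differentiable (at x) \<Longrightarrow> pd i (\<lambda>y. c * f y) x = c * pd i f x"
  by (intro pd_eqI DERIV_cmult has_real_derivative_pd)

lemma pd_mult:
  assumes "f differentiable (at x)" "h differentiable (at x)"
  shows "pd i (\<lambda>y. f y * h y) x = pd i f x * h x + f x * pd i h x"
  using DERIV_mult[OF has_real_derivative_pd[OF assms(1)] has_real_derivative_pd[OF assms(2)], of i]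
  by (intro pd_eqI) (simp add: mult.commute)

lemma pd_comp:
  assumes "f differentiable (at x)" "(\<phi> has_real_derivative D) (at (f x))"
  shows "pd i (\<lambda>y. \<phi> (f y)) x = D * pd i f x"
proof (rule pd_eqI)
  have "(\<phi> has_real_derivative D) (at (f (x + 0 *\<^sub>R axis i 1)))"
    using assms(2) by simp
  from DERIV_chain2[OF this has_real_derivative_pd[OF assms(1)]]
  show "((\<lambda>t. \<phi> (f (x + t *\<^sub>R axis i 1))) has_real_derivative D * pd i f x) (at 0)" .
qed

lemma pd_sum:
  assumes "finite A" "\<And>a. a \<in> A \<Longrightarrow> f a differentiable (at x)"
  shows "pd i (\<lambda>y. \<Sum>a\<in>A. f a y) x = (\<Sum>a\<in>A. pd i (f a) x)"
  using assms by (intro pd_eqI DERIV_sum has_real_derivative_pd)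

lemma pd_prod:
  assumes "finite I" "\<And>i. i \<in> I \<Longrightarrow> f i differentiable (at x)"
  shows "pd k (\<lambda>y. \<Prod>i\<in>I. f i y) x = (\<Sum>i\<in>I. pd k (f i) x * (\<Prod>j\<in>I - {i}. f j x))"
proof -
  obtain D where D: "\<And>i. i \<in> I \<Longrightarrow> (f i has_derivative D i) (at x)"
    using assms(2) unfolding differentiable_def by metis
  have "((\<lambda>y. \<Prod>i\<in>I. f i y) has_derivative (\<lambda>h. \<Sum>i\<in>I. D i h * (\<Prod>j\<in>I - {i}. f j x))) (at x)"
    using D by (intro has_derivative_prod) auto
  then have "pd k (\<lambda>y. \<Prod>i\<in>I. f i y) x = (\<Sum>i\<in>I. D i (axis k 1) * (\<Prod>j\<in>I - {i}. f j x))"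
    by (rule pd_has_derivative)
  also have "\<dots> = (\<Sum>i\<in>I. pd k (f i) x * (\<Prod>j\<in>I - {i}. f j x))"
    by (intro sum.cong refl) (simp add: pd_has_derivative[OF D])
  finally show ?thesis .
qed

lemma differentiable_prod:
  fixes f :: "'i \<Rightarrow> 'a::real_normed_vector \<Rightarrow> real"
  assumes "finite I" "\<And>i. i \<in> I \<Longrightarrow> f i differentiable (at x)"
  shows "(\<lambda>y. \<Prod>i\<in>I. f i y) differentiable (at x)"
proof -
  obtain D where "\<And>i. i \<in> I \<Longrightarrow> (f i has_derivative D i) (at x)"
    using assms(2) unfolding differentiable_def by metis
  then have "((\<lambda>y. \<Prod>i\<in>I. f i y) has_derivative (\<lambda>h. \<Sum>i\<in>I. D i h * (\<Prod>j\<in>I - {i}. f j x))) (at x)"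
    by (intro has_derivative_prod) auto
  then show ?thesis
    unfolding differentiable_def by blast
qed

section \<open>Smooth functions\<close>

definition smooth_upto :: "(real^4) set \<Rightarrow> nat \<Rightarrow> (real^4 \<Rightarrow> real) \<Rightarrow> bool" where
  "smooth_upto U n f \<longleftrightarrow> (\<forall>ks. length ks < n \<longrightarrow> (\<forall>x\<in>U. pds ks f differentiable (at x)))"

lemma smooth_on4_iff_smooth_upto: "smooth_on4 U f \<longleftrightarrow> (\<forall>n. smooth_upto U n f)"
  unfolding smooth_on4_def smooth_upto_def by (metis lessI)

lemma smooth_upto_0 [simp]: "smooth_upto U 0 f"
  by (simp add: smooth_upto_def)

lemma pds_append: "pds (ks @ [i]) f = pds ks (pd i f)"
  by (induction ks) auto

lemma smooth_upto_Suc: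
  "smooth_upto U (Suc n) f \<longleftrightarrow> (\<forall>x\<in>U. f differentiable (at x)) \<and> (\<forall>i. smooth_upto U n (pd i f))"
proof (intro iffI conjI allI)
  assume *: "smooth_upto U (Suc n) f"
  show "\<forall>x\<in>U. f differentiable (at x)"
    using *[unfolded smooth_upto_def, rule_format, of "[]"] by simp
  show "smooth_upto U n (pd i f)" for i
    using *[unfolded smooth_upto_def, rule_format, of "_ @ [i]"]
    by (auto simp: smooth_upto_def pds_append)
next
  assume *: "(\<forall>x\<in>U. f differentiable (at x)) \<and> (\<forall>i. smooth_upto U n (pd i f))"
  show "smooth_upto U (Suc n) f"
    unfolding smooth_upto_def
  proof (intro allI impI)
    fix ks :: "4 list"
    assume "length ks < Suc n"
    with * show "\<forall>x\<in>U. pds ks f differentiable (at x)"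
      by (cases ks rule: rev_exhaust) (auto simp: smooth_upto_def pds_append)
  qed
qed

lemma smooth_upto_mono: "smooth_upto U n f \<Longrightarrow> m \<le> n \<Longrightarrow> smooth_upto U m f"
  unfolding smooth_upto_def by auto

lemma smooth_upto_differentiable: "smooth_upto U (Suc n) f \<Longrightarrow> x \<in> U \<Longrightarrow> f differentiable (at x)"
  by (simp add: smooth_upto_Suc)

lemma smooth_upto_cong:
  assumes "open U" "\<And>y. y \<in> U \<Longrightarrow> f y = h y" "smooth_upto U n f"
  shows "smooth_upto U n h"
  using assms(2,3)
proof (induction n arbitrary: f h)
  case (Suc n)
  have "h differentiable (at x)" if "x \<in> U" for x
    using Suc.prems that assms(1) has_derivative_transform_within_open
    unfolding smooth_upto_Suc differentiable_def by metis
  moreover have "smooth_upto U n (pd i h)" for i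
  proof (rule Suc.IH)
    show "smooth_upto U n (pd i f)"
      using Suc.prems(2) by (simp add: smooth_upto_Suc)
    show "pd i f y = pd i h y" if "y \<in> U" for y
      using pd_cong_open[OF assms(1) that Suc.prems(1)] .
  qed
  ultimately show ?case
    by (simp add: smooth_upto_Suc)
qed simp

lemma smooth_upto_const: "smooth_upto U n (\<lambda>y. c)"
proof (induction n arbitrary: c)
  case (Suc n)
  have "pd i (\<lambda>y. c) = (\<lambda>y. 0)" for i
    by (simp add: pd_const fun_eq_iff)
  with Suc show ?case
    by (simp add: smooth_upto_Suc)
qed simp

lemma smooth_upto_add:
  assumes "open U" "smooth_upto U n f" "smooth_upto U n h"
  shows "smooth_upto U n (\<lambda>y. f y + h y)"
  using assms(2,3)
proof (induction n arbitrary: f h)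
  case (Suc n)
  have "smooth_upto U n (pd i (\<lambda>y. f y + h y))" for i
  proof (rule smooth_upto_cong[OF assms(1)])
    show "smooth_upto U n (\<lambda>y. pd i f y + pd i h y)"
      using Suc by (simp add: smooth_upto_Suc)
    show "pd i f y + pd i h y = pd i (\<lambda>y. f y + h y) y" if "y \<in> U" for y
      using Suc.prems that by (simp add: pd_add smooth_upto_differentiable)
  qed
  with Suc.prems show ?case
    by (simp add: smooth_upto_Suc)
qed simp

lemma smooth_upto_mult:
  assumes "open U" "smooth_upto U n f" "smooth_upto U n h"
  shows "smooth_upto U n (\<lambda>y. f y * h y)"
  using assms(2,3)
proof (induction n arbitrary: f h)
  case (Suc n)
  then have "smooth_upto U n f" "smooth_upto U n h"
    by (auto intro: smooth_upto_mono)
  have "smooth_upto U n (pd i (\<lambda>y. f y * h y))" for i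
  proof (rule smooth_upto_cong[OF assms(1)])
    show "smooth_upto U n (\<lambda>y. pd i f y * h y + f y * pd i h y)"
      using Suc \<open>smooth_upto U n f\<close> \<open>smooth_upto U n h\<close>
      by (intro smooth_upto_add[OF assms(1)]) (simp_all add: smooth_upto_Suc)
    show "pd i f y * h y + f y * pd i h y = pd i (\<lambda>y. f y * h y) y" if "y \<in> U" for y
      using Suc.prems that by (simp add: pd_mult smooth_upto_differentiable)
  qed
  with Suc.prems show ?case
    by (simp add: smooth_upto_Suc)
qed simp

lemma smooth_upto_cmult: "open U \<Longrightarrow> smooth_upto U n f \<Longrightarrow> smooth_upto U n (\<lambda>y. c * f y)"
  by (rule smooth_upto_mult[OF _ smooth_upto_const])

lemma smooth_upto_diff:
  assumes "open U" "smooth_upto U n f" "smooth_upto U n h"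
  shows "smooth_upto U n (\<lambda>y. f y - h y)"
  using smooth_upto_add[OF assms(1,2) smooth_upto_cmult[OF assms(1,3), of "-1"]] by simp

lemma smooth_upto_sum:
  assumes "open U" "finite A" "\<And>a. a \<in> A \<Longrightarrow> smooth_upto U n (f a)"
  shows "smooth_upto U n (\<lambda>y. \<Sum>a\<in>A. f a y)"
  using assms(2,3) by (induction A rule: finite_induct) (simp_all add: smooth_upto_const smooth_upto_add[OF assms(1)])

lemma smooth_upto_prod:
  assumes "open U" "finite A" "\<And>a. a \<in> A \<Longrightarrow> smooth_upto U n (f a)"
  shows "smooth_upto U n (\<lambda>y. \<Prod>a\<in>A. f a y)"
  using assms(2,3) by (induction A rule: finite_induct) (simp_all add: smooth_upto_const smooth_upto_mult[OF assms(1)])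

lemma smooth_upto_comp:
  assumes "open U" "\<And>y. y \<in> U \<Longrightarrow> f y \<in> S" "\<And>t. t \<in> S \<Longrightarrow> (\<phi> has_real_derivative \<phi>' t) (at t)"
    and "smooth_upto U (Suc n) f" "smooth_upto U n (\<lambda>y. \<phi>' (f y))"
  shows "smooth_upto U (Suc n) (\<lambda>y. \<phi> (f y))"
proof -
  have \<phi>: "(\<phi> has_real_derivative \<phi>' (f y)) (at (f y))" if "y \<in> U" for y
    using assms(2,3) that by blast
  have "(\<lambda>y. \<phi> (f y)) differentiable (at y)" if "y \<in> U" for y
  proof -
    have "\<phi> differentiable (at (f y))"
      using \<phi>[OF that] unfolding differentiable_def has_field_derivative_def by blast
    then show ?thesis
      using differentiable_compose smooth_upto_differentiable[OF assms(4) that] by blast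
  qed
  moreover have "smooth_upto U n (pd i (\<lambda>y. \<phi> (f y)))" for i
  proof (rule smooth_upto_cong[OF assms(1)])
    show "smooth_upto U n (\<lambda>y. \<phi>' (f y) * pd i f y)"
      using assms(4,5) by (intro smooth_upto_mult[OF assms(1)]) (simp_all add: smooth_upto_Suc)
    show "\<phi>' (f y) * pd i f y = pd i (\<lambda>y. \<phi> (f y)) y" if "y \<in> U" for y
      using pd_comp[OF smooth_upto_differentiable[OF assms(4) that] \<phi>[OF that]] by simp
  qed
  ultimately show ?thesis
    by (simp add: smooth_upto_Suc)
qed

lemma smooth_upto_inverse:
  assumes "open U" "smooth_upto U n f" "\<And>y. y \<in> U \<Longrightarrow> f y \<noteq> 0"
  shows "smooth_upto U n (\<lambda>y. inverse (f y))"
  using assms(2)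
proof (induction n)
  case (Suc n)
  then have "smooth_upto U n (\<lambda>y. inverse (f y))"
    using smooth_upto_mono by (metis le_SucI order_refl)
  then have "smooth_upto U n (\<lambda>y. - (inverse (f y) * inverse (f y)))"
    using smooth_upto_cmult[OF assms(1) smooth_upto_mult[OF assms(1)], of n _ _ "-1"] by simp
  moreover have "(inverse has_real_derivative - (inverse t * inverse t)) (at t)" if "t \<noteq> 0" for t
    using DERIV_inverse[OF that] by simp
  ultimately show ?case
    using assms(3) by (intro smooth_upto_comp[OF assms(1) _ _ Suc.prems, where S="- {0}"]) auto
qed simp

lemma smooth_upto_sqrt:
  assumes "open U" "smooth_upto U n f" "\<And>y. y \<in> U \<Longrightarrow> f y > 0"
  shows "smooth_upto U n (\<lambda>y. sqrt (f y))"
  using assms(2)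
proof (induction n)
  case (Suc n)
  then have sqrt_f: "smooth_upto U n (\<lambda>y. sqrt (f y))"
    using smooth_upto_mono by (metis le_SucI order_refl)
  have "sqrt (f y) \<noteq> 0" if "y \<in> U" for y
    using assms(3)[OF that] by simp
  from smooth_upto_cmult[OF assms(1) smooth_upto_inverse[OF assms(1) sqrt_f this], of "1/2"]
  have "smooth_upto U n (\<lambda>y. inverse (sqrt (f y)) / 2)"
    by (simp add: mult.commute)
  then show ?case
    using assms(3) by (intro smooth_upto_comp[OF assms(1) _ _ Suc.prems, where S="{0<..}"])
      (auto intro: DERIV_real_sqrt)
qed simp

lemma smooth_on4_const: "smooth_on4 U (\<lambda>y. c)"
  by (simp add: smooth_on4_iff_smooth_upto smooth_upto_const)

lemma smooth_on4_add: "open U \<Longrightarrow> smooth_on4 U f \<Longrightarrow> smooth_on4 U h \<Longrightarrow> smooth_on4 U (\<lambda>y. f y + h y)"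
  by (simp add: smooth_on4_iff_smooth_upto smooth_upto_add)

lemma smooth_on4_diff: "open U \<Longrightarrow> smooth_on4 U f \<Longrightarrow> smooth_on4 U h \<Longrightarrow> smooth_on4 U (\<lambda>y. f y - h y)"
  by (simp add: smooth_on4_iff_smooth_upto smooth_upto_diff)

lemma smooth_on4_mult: "open U \<Longrightarrow> smooth_on4 U f \<Longrightarrow> smooth_on4 U h \<Longrightarrow> smooth_on4 U (\<lambda>y. f y * h y)"
  by (simp add: smooth_on4_iff_smooth_upto smooth_upto_mult)

lemma smooth_on4_cmult: "open U \<Longrightarrow> smooth_on4 U f \<Longrightarrow> smooth_on4 U (\<lambda>y. c * f y)"
  by (simp add: smooth_on4_iff_smooth_upto smooth_upto_cmult)

lemma smooth_on4_sum:
  "open U \<Longrightarrow> finite A \<Longrightarrow> (\<And>a. a \<in> A \<Longrightarrow> smooth_on4 U (f a)) \<Longrightarrow> smooth_on4 U (\<lambda>y. \<Sum>a\<in>A. f a y)"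
  by (simp add: smooth_on4_iff_smooth_upto smooth_upto_sum)

lemma smooth_on4_prod:
  "open U \<Longrightarrow> finite A \<Longrightarrow> (\<And>a. a \<in> A \<Longrightarrow> smooth_on4 U (f a)) \<Longrightarrow> smooth_on4 U (\<lambda>y. \<Prod>a\<in>A. f a y)"
  by (simp add: smooth_on4_iff_smooth_upto smooth_upto_prod)

lemma smooth_on4_pd: "smooth_on4 U f \<Longrightarrow> smooth_on4 U (pd i f)"
  by (metis smooth_on4_iff_smooth_upto smooth_upto_Suc)

lemma smooth_on4_differentiable: "smooth_on4 U f \<Longrightarrow> x \<in> U \<Longrightarrow> f differentiable (at x)"
  by (metis smooth_on4_iff_smooth_upto smooth_upto_differentiable)

lemma smooth_on4_cong: "open U \<Longrightarrow> (\<And>y. y \<in> U \<Longrightarrow> f y = h y) \<Longrightarrow> smooth_on4 U f \<Longrightarrow> smooth_on4 U h"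
  by (metis smooth_on4_iff_smooth_upto smooth_upto_cong)

lemma smooth_on4_comp:
  assumes "open U" "\<And>y. y \<in> U \<Longrightarrow> f y \<in> S" "\<And>t. t \<in> S \<Longrightarrow> (\<phi> has_real_derivative \<phi>' t) (at t)"
    and "smooth_on4 U f" "smooth_on4 U (\<lambda>y. \<phi>' (f y))"
  shows "smooth_on4 U (\<lambda>y. \<phi> (f y))"
  unfolding smooth_on4_iff_smooth_upto
proof
  fix n
  have "smooth_upto U (Suc n) (\<lambda>y. \<phi> (f y))"
    using assms by (intro smooth_upto_comp[OF assms(1-3)]) (simp_all add: smooth_on4_iff_smooth_upto)
  then show "smooth_upto U n (\<lambda>y. \<phi> (f y))"
    by (rule smooth_upto_mono) simp
qed

lemma smooth_on4_inverse:
  "open U \<Longrightarrow> smooth_on4 U f \<Longrightarrow> (\<And>y. y \<in> U \<Longrightarrow> f y \<noteq> 0) \<Longrightarrow> smooth_on4 U (\<lambda>y. inverse (f y))"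
  by (simp add: smooth_on4_iff_smooth_upto smooth_upto_inverse)

lemma smooth_on4_divide:
  "open U \<Longrightarrow> smooth_on4 U f \<Longrightarrow> smooth_on4 U h \<Longrightarrow> (\<And>y. y \<in> U \<Longrightarrow> h y \<noteq> 0) \<Longrightarrow>
    smooth_on4 U (\<lambda>y. f y / h y)"
  by (simp add: divide_inverse smooth_on4_mult smooth_on4_inverse)

lemma smooth_on4_sqrt:
  "open U \<Longrightarrow> smooth_on4 U f \<Longrightarrow> (\<And>y. y \<in> U \<Longrightarrow> f y > 0) \<Longrightarrow> smooth_on4 U (\<lambda>y. sqrt (f y))"
  by (simp add: smooth_on4_iff_smooth_upto smooth_upto_sqrt)

lemma smooth_on4_abs:
  assumes "open U" "smooth_on4 U f" "\<And>y. y \<in> U \<Longrightarrow> f y \<noteq> 0"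
  shows "smooth_on4 U (\<lambda>y. \<bar>f y\<bar>)"
proof (rule smooth_on4_cong[OF assms(1)])
  have "f y * f y > 0" if "y \<in> U" for y
    using assms(3)[OF that] by (metis not_real_square_gt_zero)
  then show "smooth_on4 U (\<lambda>y. sqrt (f y * f y))"
    by (intro smooth_on4_sqrt smooth_on4_mult assms(1,2))
qed simp

lemma smooth_on4_square: "open U \<Longrightarrow> smooth_on4 U f \<Longrightarrow> smooth_on4 U (\<lambda>y. (f y)\<^sup>2)"
  by (simp add: power2_eq_square smooth_on4_mult)

lemma smooth_on4_arcsin:
  assumes "open U" "smooth_on4 U f" "\<And>y. y \<in> U \<Longrightarrow> \<bar>f y\<bar> < 1"
  shows "smooth_on4 U (\<lambda>y. arcsin (f y))"
proof (rule smooth_on4_comp[OF assms(1) _ DERIV_arcsin assms(2), where S="{-1<..<1}"])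
  have pos: "1 - (f y)\<^sup>2 > 0" if "y \<in> U" for y
    using assms(3)[OF that] by (simp add: abs_square_less_1)
  then have "smooth_on4 U (\<lambda>y. sqrt (1 - (f y)\<^sup>2))"
    by (intro smooth_on4_sqrt smooth_on4_diff smooth_on4_const smooth_on4_square assms(1,2))
  then show "smooth_on4 U (\<lambda>y. inverse (sqrt (1 - (f y)\<^sup>2)))"
    by (rule smooth_on4_inverse[OF assms(1)]) (metis pos real_sqrt_gt_zero less_irrefl)
qed (use assms(3) in \<open>auto simp: abs_less_iff\<close>)

lemma smooth_on4_arsinh:
  assumes "open U" "smooth_on4 U f"
  shows "smooth_on4 U (\<lambda>y. arsinh (f y))"
proof (rule smooth_on4_comp[OF assms(1) _ arsinh_real_has_field_derivative assms(2), where S=UNIV])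
  have pos: "(f y)\<^sup>2 + 1 > 0" for y
    by (simp add: add_nonneg_pos)
  then have "smooth_on4 U (\<lambda>y. sqrt ((f y)\<^sup>2 + 1))"
    by (intro smooth_on4_sqrt smooth_on4_add smooth_on4_const smooth_on4_square assms(1,2))
  then show "smooth_on4 U (\<lambda>y. 1 / sqrt ((f y)\<^sup>2 + 1))"
    by (rule smooth_on4_divide[OF assms(1) smooth_on4_const]) (metis pos real_sqrt_gt_zero less_irrefl)
qed simp

section \<open>Minors and inverses of matrices\<close>

lemma matrix_inv_right: "invertible A \<Longrightarrow> A ** matrix_inv A = mat 1"
  and matrix_inv_left: "invertible A \<Longrightarrow> matrix_inv A ** A = mat 1"
  unfolding invertible_def matrix_inv_def by (metis (mono_tags, lifting) someI)+

lemma matrix_inv_symmetric: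
  fixes A :: "'a::comm_semiring_1^'n^'n"
  assumes "transpose A = A" "invertible A"
  shows "matrix_inv A $ a $ b = matrix_inv A $ b $ a"
proof -
  let ?B = "matrix_inv A"
  have "A ** transpose ?B = transpose (?B ** A)"
    using assms(1) by (simp add: matrix_transpose_mul)
  also have "\<dots> = mat 1"
    using matrix_inv_left[OF assms(2)] by simp
  finally have "A ** transpose ?B = mat 1" .
  then have "?B = (?B ** A) ** transpose ?B"
    by (simp add: matrix_mul_assoc[symmetric])
  also have "\<dots> = transpose ?B"
    using matrix_inv_left[OF assms(2)] by simp
  finally have "?B $ a $ b = transpose ?B $ a $ b"
    by (rule arg_cong)
  then show ?thesis
    by (simp add: transpose_def)
qed

lemma matrix_inv_entry_cramer:
  fixes A :: "'a::field^'n^'n"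
  assumes "det A \<noteq> 0"
  shows "matrix_inv A $ k $ j = det (\<chi> i l. if l = k then (if i = j then 1 else 0) else A $ i $ l) / det A"
proof -
  let ?b = "(\<chi> i. if i = j then 1 else 0) :: 'a^'n"
  have "A *v (\<chi> k. matrix_inv A $ k $ j) = ?b"
    using matrix_inv_right[of A] assms invertible_det_nz[of A]
    by (simp add: vec_eq_iff matrix_vector_mult_def matrix_matrix_mult_def mat_def)
  then have "(\<chi> k. matrix_inv A $ k $ j) = (\<chi> k. det (\<chi> i l. if l = k then ?b $ i else A $ i $ l) / det A)"
    using cramer[OF assms] by blast
  then show ?thesis
    by (simp add: vec_eq_iff cong: if_cong)
qed

lemma det_replace_row:
  fixes A :: "'a::field^'n^'n"
  assumes "invertible A"
  shows "det (\<chi> r c. if r = i then v c else A $ r $ c) = det A * (\<Sum>j\<in>UNIV. v j * matrix_inv A $ j $ i)"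
proof -
  define y where "y = (\<chi> c. v c) v* matrix_inv A"
  have "(\<chi> c. v c) = y v* A"
    using matrix_inv_left[OF assms] by (simp add: y_def vector_matrix_mul_assoc)
  then have "(\<chi> r c. if r = i then v c else A $ r $ c)
      = (\<chi> r. if r = i then (\<Sum>k\<in>UNIV. y $ k *s row k A) else row r A)"
    by (simp add: vec_eq_iff row_def vector_matrix_mult_def sum_component mult.commute)
  then show ?thesis
    by (simp add: cramer_lemma_transpose y_def vector_matrix_mult_def mult.commute)
qed

lemma det_eta: "det eta = -1"
proof -
  have "det eta = (\<Prod>i\<in>UNIV. xi i)"
    by (subst det_diagonal) (simp_all add: eta_def)
  also have "\<dots> = xi 0 * (\<Prod>i\<in>UNIV - {0}. xi i)"
    by (simp add: prod.remove)
  also have "(\<Prod>i\<in>UNIV - {0}. xi i) = 1"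
    by (intro prod.neutral) (simp add: xi_def)
  finally show ?thesis
    by (simp add: xi_def)
qed

lemma det_neg_if_congruent_eta:
  fixes A :: "real^4^4"
  assumes "transpose P ** A ** P = eta"
  shows "det A < 0"
proof -
  have "det P * det P * det A = -1"
    using arg_cong[OF assms, of det] by (simp add: det_mul det_transpose det_eta mult_ac)
  moreover have "det P * det P \<ge> 0"
    by simp
  ultimately show ?thesis
    by (smt (verit) mult_nonneg_nonneg)
qed

lemma subdet_cong: "(\<And>i j. i \<in> S \<Longrightarrow> A $ i $ j = A' $ i $ j) \<Longrightarrow> subdet A S = subdet A' S"
  unfolding subdet_def by (intro sum.cong refl) simp

lemma subdet_singleton: "subdet A {a} = A $ a $ a"
proof -
  have "{p. p permutes {a}} = {id}"
    by auto
  then show ?thesis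
    unfolding subdet_def by simp
qed

lemma subdet_doubleton:
  assumes "a \<noteq> b"
  shows "subdet A {a, b} = A $ a $ a * A $ b $ b - A $ a $ b * A $ b $ a"
proof -
  let ?t = "Transposition.transpose a b"
  have "{p. p permutes {a, b}} = {id, ?t}"
    by (simp add: permutes_doubleton_iff set_eq_iff)
  moreover have "id \<noteq> ?t"
    using assms by (metis id_apply transpose_apply_first)
  ultimately show ?thesis
    using assms by (simp add: subdet_def sign_swap_id)
qed

lemma det_eq_subdet_if_unit_rows:
  fixes A :: "real^4^4"
  assumes "\<And>i j. i \<in> T \<Longrightarrow> A $ i $ j = (if i = j then 1 else 0)"
  shows "det A = subdet A (- T)"
proof -
  let ?f = "\<lambda>p. of_int (sign p) * (\<Prod>i\<in>UNIV. A $ i $ p i)"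
  have vanish: "?f p = 0" if "p permutes UNIV" "\<not> p permutes (- T)" for p
  proof -
    have "\<exists>i\<in>T. p i \<noteq> i"
    proof (rule ccontr)
      assume "\<not> (\<exists>i\<in>T. p i \<noteq> i)"
      then have "p permutes (- T)"
        using that(1) unfolding permutes_def by auto
      with that(2) show False ..
    qed
    then obtain i where "i \<in> T" "p i \<noteq> i" ..
    then have "A $ i $ p i = 0"
      using assms by simp
    then show ?thesis
      by (auto intro: prod_zero)
  qed
  have "det A = (\<Sum>p\<in>{p. p permutes (- T)}. ?f p)"
    unfolding det_def using vanish permutes_subset[of _ "- T" UNIV]
    by (intro sum.mono_neutral_right finite_permutations) auto
  also have "\<dots> = subdet A (- T)"
    unfolding subdet_def
  proof (intro sum.cong refl)
    fix p
    assume "p \<in> {p. p permutes (- T)}"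
    then have "(\<Prod>i\<in>T. A $ i $ p i) = 1"
      using assms by (intro prod.neutral) (auto simp: permutes_def)
    then show "?f p = of_int (sign p) * (\<Prod>i\<in>- T. A $ i $ p i)"
      using prod.subset_diff[of T UNIV "\<lambda>i. A $ i $ p i"] by (simp add: Compl_eq_Diff_UNIV)
  qed
  finally show ?thesis .
qed

text \<open>The matrix \<open>A'\<close> that agrees with \<open>A\<close> off \<open>T\<close> and with the identity on \<open>T\<close>
  factors as \<open>(A' ** matrix_inv A) ** A\<close>, and both \<open>A'\<close> and \<open>A' ** matrix_inv A\<close> have unit rows.\<close>

lemma jacobi_complementary_minor:
  fixes A :: "real^4^4"
  assumes "invertible A"
  shows "subdet A (- T) = det A * subdet (matrix_inv A) T"
proof -
  let ?B = "matrix_inv A"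
  define A' :: "real^4^4" where "A' = (\<chi> i j. if i \<in> T then (if i = j then 1 else 0) else A $ i $ j)"
  define M where "M = A' ** ?B"
  have "M ** A = A'"
    using matrix_inv_left[OF assms] by (simp add: M_def matrix_mul_assoc[symmetric])
  then have "det M * det A = det A'"
    by (metis det_mul)
  also have "det A' = subdet A (- T)"
    by (subst det_eq_subdet_if_unit_rows[of T]) (auto simp: A'_def intro: subdet_cong)
  finally have "subdet A (- T) = det M * det A" ..
  moreover have "det M = subdet ?B T"
  proof -
    have "M $ i $ j = (if i = j then 1 else 0)" if "i \<in> - T" for i j
      using that matrix_inv_right[OF assms]
      by (simp add: M_def A'_def matrix_matrix_mult_def mat_def vec_eq_iff)
    then have "det M = subdet M T"
      using det_eq_subdet_if_unit_rows[of "- T" M] by simp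
    also have "\<dots> = subdet ?B T"
    proof (rule subdet_cong)
      fix i j
      assume "i \<in> T"
      then have "M $ i $ j = (\<Sum>k\<in>UNIV. (if i = k then 1 else 0) * ?B $ k $ j)"
        by (simp add: M_def A'_def matrix_matrix_mult_def)
      also have "\<dots> = ?B $ i $ j"
        by (simp add: if_distrib[of "\<lambda>x. x * _"] cong: if_cong)
      finally show "M $ i $ j = ?B $ i $ j" .
    qed
    finally show ?thesis .
  qed
  ultimately show ?thesis
    by simp
qed

section \<open>Derivatives of determinants and inverses\<close>

lemma pd_det_as_sum_over_rows:
  fixes M :: "real^4 \<Rightarrow> real^4^4"
  assumes "\<And>i j. (\<lambda>z. M z $ i $ j) differentiable (at y)"
  shows "pd k (\<lambda>z. det (M z)) y
    = (\<Sum>i\<in>UNIV. det (\<chi> r c. if r = i then pd k (\<lambda>z. M z $ i $ c) y else M y $ r $ c))"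
proof -
  let ?dM = "\<lambda>i c. pd k (\<lambda>z. M z $ i $ c) y"
  let ?term = "\<lambda>i p. ?dM i (p i) * (\<Prod>j\<in>UNIV - {i}. M y $ j $ p j)"
  have "pd k (\<lambda>z. det (M z)) y
      = (\<Sum>p\<in>{p. p permutes UNIV}. of_int (sign p) * (\<Sum>i\<in>UNIV. ?term i p))"
    unfolding det_def using assms
    by (simp add: pd_sum pd_cmult pd_prod differentiable_prod finite_permutations)
  also have "\<dots> = (\<Sum>i\<in>UNIV. \<Sum>p\<in>{p. p permutes UNIV}. of_int (sign p) * ?term i p)"
    by (simp add: sum_distrib_left sum.swap[of _ _ UNIV])
  also have "\<dots> = (\<Sum>i\<in>UNIV. det (\<chi> r c. if r = i then ?dM i c else M y $ r $ c))"
    unfolding det_def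
  proof (intro sum.cong refl arg_cong[where f="\<lambda>t. _ * t"])
    fix i and p :: "4 \<Rightarrow> 4"
    have "(\<Prod>r\<in>UNIV - {i}. if r = i then ?dM i (p r) else M y $ r $ p r) = (\<Prod>j\<in>UNIV - {i}. M y $ j $ p j)"
      by (rule prod.cong) auto
    then show "?term i p = (\<Prod>r\<in>UNIV. (\<chi> r c. if r = i then ?dM i c else M y $ r $ c) $ r $ p r)"
      by (simp add: prod.remove[of UNIV i])
  qed
  finally show ?thesis .
qed

lemma pd_det:
  fixes M :: "real^4 \<Rightarrow> real^4^4"
  assumes "\<And>i j. (\<lambda>z. M z $ i $ j) differentiable (at y)" "invertible (M y)"
  shows "pd k (\<lambda>z. det (M z)) y
    = det (M y) * (\<Sum>i\<in>UNIV. \<Sum>j\<in>UNIV. pd k (\<lambda>z. M z $ i $ j) y * matrix_inv (M y) $ j $ i)"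
proof -
  have "det (\<chi> r c. if r = i then pd k (\<lambda>z. M z $ i $ c) y else M y $ r $ c)
      = det (M y) * (\<Sum>j\<in>UNIV. pd k (\<lambda>z. M z $ i $ j) y * matrix_inv (M y) $ j $ i)" for i
    by (rule det_replace_row[OF assms(2)])
  then show ?thesis
    by (simp add: pd_det_as_sum_over_rows[OF assms(1)] sum_distrib_left)
qed

lemma pd_matrix_inv:
  fixes M :: "real^4 \<Rightarrow> real^4^4"
  assumes "open U" "y \<in> U" "\<And>z. z \<in> U \<Longrightarrow> invertible (M z)"
    and "\<And>i j. (\<lambda>z. M z $ i $ j) differentiable (at y)"
    and "\<And>i j. (\<lambda>z. matrix_inv (M z) $ i $ j) differentiable (at y)"
  shows "pd k (\<lambda>z. matrix_inv (M z) $ a $ b) y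
    = - (\<Sum>c\<in>UNIV. \<Sum>d\<in>UNIV. matrix_inv (M y) $ a $ c * pd k (\<lambda>z. M z $ c $ d) y * matrix_inv (M y) $ d $ b)"
proof -
  let ?A = "M y" and ?B = "matrix_inv (M y)"
  define dA :: "real^4^4" where "dA = (\<chi> i j. pd k (\<lambda>z. M z $ i $ j) y)"
  define dB :: "real^4^4" where "dB = (\<chi> i j. pd k (\<lambda>z. matrix_inv (M z) $ i $ j) y)"
  have "(\<Sum>c\<in>UNIV. dA $ i $ c * ?B $ c $ j + ?A $ i $ c * dB $ c $ j) = 0" for i j
  proof -
    have "(\<Sum>c\<in>UNIV. dA $ i $ c * ?B $ c $ j + ?A $ i $ c * dB $ c $ j)
        = pd k (\<lambda>z. \<Sum>c\<in>UNIV. M z $ i $ c * matrix_inv (M z) $ c $ j) y"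
      using assms(4,5) by (simp add: pd_sum pd_mult dA_def dB_def)
    also have "\<dots> = pd k (\<lambda>z. if i = j then 1 else 0) y"
      using matrix_inv_right[OF assms(3)]
      by (intro pd_cong_open[OF assms(1,2)]) (simp add: matrix_matrix_mult_def mat_def vec_eq_iff)
    finally show ?thesis
      by (simp add: pd_const)
  qed
  then have "dA ** ?B + ?A ** dB = 0"
    by (simp add: vec_eq_iff matrix_matrix_mult_def sum.distrib[symmetric])
  then have "?B ** (dA ** ?B) + (?B ** ?A) ** dB = 0"
    by (metis matrix_add_ldistrib matrix_mul_assoc times0_right)
  then have "dB = - (?B ** (dA ** ?B))"
    using matrix_inv_left[OF assms(3)[OF assms(2)]] by (simp add: eq_neg_iff_add_eq_0 add.commute)
  then have "dB $ a $ b = - (\<Sum>c\<in>UNIV. ?B $ a $ c * (\<Sum>d\<in>UNIV. dA $ c $ d * ?B $ d $ b))"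
    by (simp add: matrix_matrix_mult_def)
  then show ?thesis
    by (simp add: dA_def dB_def sum_distrib_left mult.assoc)
qed

lemma smooth_on4_det:
  "open U \<Longrightarrow> (\<And>i j. smooth_on4 U (\<lambda>y. M y $ i $ j)) \<Longrightarrow> smooth_on4 U (\<lambda>y. det (M y :: real^4^4))"
  unfolding det_def by (intro smooth_on4_sum smooth_on4_cmult smooth_on4_prod finite_permutations) auto

lemma smooth_on4_subdet:
  "open U \<Longrightarrow> (\<And>i j. smooth_on4 U (\<lambda>y. M y $ i $ j)) \<Longrightarrow> smooth_on4 U (\<lambda>y. subdet (M y) S)"
  unfolding subdet_def by (intro smooth_on4_sum smooth_on4_cmult smooth_on4_prod finite_permutations) auto

lemma smooth_on4_matrix_inv:
  fixes M :: "real^4 \<Rightarrow> real^4^4"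
  assumes "open U" "\<And>i j. smooth_on4 U (\<lambda>y. M y $ i $ j)" "\<And>y. y \<in> U \<Longrightarrow> det (M y) \<noteq> 0"
  shows "smooth_on4 U (\<lambda>y. matrix_inv (M y) $ a $ b)"
proof (rule smooth_on4_cong[OF assms(1)])
  have "smooth_on4 U (\<lambda>y. (\<chi> i l. if l = a then (if i = b then 1 else 0) else M y $ i $ l) $ i $ j)" for i j
    by (cases "j = a") (simp_all add: smooth_on4_const assms(2))
  then show "smooth_on4 U (\<lambda>y. det (\<chi> i l. if l = a then (if i = b then 1 else 0) else M y $ i $ l) / det (M y))"
    using assms by (intro smooth_on4_divide smooth_on4_det)
  show "det (\<chi> i l. if l = a then (if i = b then 1 else 0) else M y $ i $ l) / det (M y) = matrix_inv (M y) $ a $ b"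
    if "y \<in> U" for y
    using matrix_inv_entry_cramer[OF assms(3)[OF that]] by simp
qed

section \<open>Contractions of Christoffel symbols\<close>

lemma sum_nested3_eq_sum_tuple:
  fixes F :: "'a::finite \<Rightarrow> 'b::finite \<Rightarrow> 'c::finite \<Rightarrow> real"
  shows "(\<Sum>a\<in>UNIV. \<Sum>b\<in>UNIV. \<Sum>c\<in>UNIV. F a b c) = (\<Sum>(a,b,c)\<in>UNIV. F a b c)"
  by (simp add: sum.cartesian_product UNIV_Times_UNIV[symmetric] del: UNIV_Times_UNIV)

lemma sum_nested4_eq_sum_tuple:
  fixes F :: "'a::finite \<Rightarrow> 'b::finite \<Rightarrow> 'c::finite \<Rightarrow> 'd::finite \<Rightarrow> real"
  shows "(\<Sum>a\<in>UNIV. \<Sum>b\<in>UNIV. \<Sum>c\<in>UNIV. \<Sum>d\<in>UNIV. F a b c d) = (\<Sum>(a,b,c,d)\<in>UNIV. F a b c d)"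
  by (simp add: sum.cartesian_product UNIV_Times_UNIV[symmetric] del: UNIV_Times_UNIV)

lemma christoffel_trace:
  fixes G :: "'n::finite \<Rightarrow> 'n \<Rightarrow> real" and D C :: "'n \<Rightarrow> 'n \<Rightarrow> 'n \<Rightarrow> real"
  assumes G_sym: "\<And>a b. G a b = G b a"
    and C_def: "\<And>l m n. C l m n = 1/2 * (\<Sum>r\<in>UNIV. G l r * (D m r n + D n r m - D r m n))"
  shows "(\<Sum>s\<in>UNIV. C s s k) = 1/2 * (\<Sum>a\<in>UNIV. \<Sum>b\<in>UNIV. D k a b * G b a)"
proof -
  have swap: "(\<Sum>s\<in>UNIV. \<Sum>r\<in>UNIV. G s r * D s r k) = (\<Sum>s\<in>UNIV. \<Sum>r\<in>UNIV. G s r * D r s k)"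
    by (subst sum.swap) (simp add: G_sym)
  have "(\<Sum>s\<in>UNIV. C s s k) = 1/2 * (\<Sum>s\<in>UNIV. \<Sum>r\<in>UNIV. G s r * D s r k + G s r * D k r s - G s r * D r s k)"
    unfolding C_def by (simp add: sum_distrib_left distrib_left right_diff_distrib)
  also have "\<dots> = 1/2 * (\<Sum>s\<in>UNIV. \<Sum>r\<in>UNIV. G s r * D k r s)"
    using swap by (simp add: sum.distrib sum_subtractf)
  also have "(\<Sum>s\<in>UNIV. \<Sum>r\<in>UNIV. G s r * D k r s) = (\<Sum>a\<in>UNIV. \<Sum>b\<in>UNIV. D k a b * G b a)"
    by (subst sum.swap) (simp add: mult.commute)
  finally show ?thesis .
qed

lemma christoffel_metric_compatibility:
  fixes G :: "'n::finite \<Rightarrow> 'n \<Rightarrow> real" and D C :: "'n \<Rightarrow> 'n \<Rightarrow> 'n \<Rightarrow> real"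
  assumes G_sym: "\<And>a b. G a b = G b a"
    and D_sym: "\<And>k a b. D k a b = D k b a"
    and C_def: "\<And>l m n. C l m n = 1/2 * (\<Sum>r\<in>UNIV. G l r * (D m r n + D n r m - D r m n))"
  shows "(\<Sum>c\<in>UNIV. G a c * C b k c + G b c * C a k c) = (\<Sum>c\<in>UNIV. \<Sum>d\<in>UNIV. G a c * D k c d * G d b)"
proof -
  have "(\<Sum>c\<in>UNIV. G a c * C b k c) = (\<Sum>c\<in>UNIV. \<Sum>r\<in>UNIV. G a c * G b r * (D k r c + D c r k - D r k c) / 2)"
    unfolding C_def by (simp add: sum_distrib_left sum_divide_distrib mult_ac)
  moreover have "(\<Sum>c\<in>UNIV. G b c * C a k c) = (\<Sum>r\<in>UNIV. \<Sum>c\<in>UNIV. G a c * G b r * (D k c r + D r c k - D c k r) / 2)"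
    unfolding C_def by (simp add: sum_distrib_left sum_divide_distrib mult_ac)
  moreover note sum.swap[of "\<lambda>r c. G a c * G b r * (D k c r + D r c k - D c k r) / 2" UNIV UNIV]
  ultimately have "(\<Sum>c\<in>UNIV. G a c * C b k c + G b c * C a k c) = (\<Sum>c\<in>UNIV. \<Sum>r\<in>UNIV.
      G a c * G b r * (D k r c + D c r k - D r k c) / 2 + G a c * G b r * (D k c r + D r c k - D c k r) / 2)"
    by (simp add: sum.distrib)
  also have "\<dots> = (\<Sum>c\<in>UNIV. \<Sum>r\<in>UNIV. G a c * D k c r * G r b)"
  proof (intro sum.cong refl)
    fix c r
    show "G a c * G b r * (D k r c + D c r k - D r k c) / 2 + G a c * G b r * (D k c r + D r c k - D c k r) / 2
      = G a c * D k c r * G r b"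
      using D_sym[of k c r] D_sym[of c r k] D_sym[of r c k] G_sym[of b r] by (simp add: field_simps)
  qed
  finally show ?thesis .
qed

text \<open>The algebra at a single point: \<open>G\<close> stands for the inverse metric, \<open>C\<close> for the
  Christoffel symbols and \<open>dG k a b\<close> for \<open>\<partial>\<^sub>k g\<^sup>a\<^sup>b\<close>, which metric compatibility
  expresses through \<open>C\<close>.\<close>

locale connection_algebra =
  fixes G :: "'n::finite \<Rightarrow> 'n \<Rightarrow> real" and C dG :: "'n \<Rightarrow> 'n \<Rightarrow> 'n \<Rightarrow> real"
  assumes G_sym: "G a b = G b a"
    and C_sym: "C l m n = C l n m"
    and dG_eq: "dG k a b = - (\<Sum>c\<in>UNIV. G a c * C b k c + G b c * C a k c)"
begin

text \<open>Every quadratic term in \<open>C\<close> below is brought, by relabelling dummy indices,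
  to one of the following three normal forms.\<close>

definition trace_contraction :: real where
  "trace_contraction = (\<Sum>m\<in>UNIV. \<Sum>n\<in>UNIV. \<Sum>s\<in>UNIV. G m n * (\<Sum>l\<in>UNIV. C l l s) * C s m n)"

definition cross_contraction :: real where
  "cross_contraction = (\<Sum>m\<in>UNIV. \<Sum>n\<in>UNIV. \<Sum>l\<in>UNIV. \<Sum>s\<in>UNIV. G m n * (C l n s * C s m l))"

definition trace_trace_contraction :: real where
  "trace_trace_contraction = (\<Sum>m\<in>UNIV. \<Sum>s\<in>UNIV. (\<Sum>l\<in>UNIV. C l l m) * (\<Sum>l\<in>UNIV. C l l s) * G s m)"

lemma gamma_gamma_contraction:
  "(\<Sum>\<mu>\<in>UNIV. \<Sum>\<nu>\<in>UNIV. G \<mu> \<nu> * (\<Sum>\<rho>\<in>UNIV. \<Sum>\<sigma>\<in>UNIV. C \<rho> \<mu> \<sigma> * C \<sigma> \<rho> \<nu> - C \<rho> \<mu> \<nu> * C \<sigma> \<rho> \<sigma>))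
    = cross_contraction - trace_contraction"
proof -
  have "(\<Sum>\<mu>\<in>UNIV. \<Sum>\<nu>\<in>UNIV. G \<mu> \<nu> * (\<Sum>\<rho>\<in>UNIV. \<Sum>\<sigma>\<in>UNIV. C \<rho> \<mu> \<sigma> * C \<sigma> \<rho> \<nu>)) = cross_contraction"
    unfolding cross_contraction_def sum_distrib_left sum_nested4_eq_sum_tuple
    by (rule sum.reindex_bij_witness[where i="\<lambda>(m,n,l,s). (n,m,l,s)" and j="\<lambda>(m,n,l,s). (n,m,l,s)"])
      (auto simp: G_sym C_sym mult_ac)
  moreover have "(\<Sum>\<mu>\<in>UNIV. \<Sum>\<nu>\<in>UNIV. G \<mu> \<nu> * (\<Sum>\<rho>\<in>UNIV. \<Sum>\<sigma>\<in>UNIV. C \<rho> \<mu> \<nu> * C \<sigma> \<rho> \<sigma>)) = trace_contraction"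
    unfolding trace_contraction_def sum_distrib_left sum_distrib_right sum_nested4_eq_sum_tuple
    by (rule sum.reindex_bij_witness[where i="\<lambda>(m,n,s,l). (m,n,s,l)" and j="\<lambda>(m,n,s,l). (m,n,s,l)"])
      (auto simp: G_sym C_sym mult_ac)
  ultimately show ?thesis
    by (simp add: sum_subtractf right_diff_distrib)
qed

lemma ricci_contraction:
  fixes P :: "'n \<Rightarrow> 'n \<Rightarrow> 'n \<Rightarrow> 'n \<Rightarrow> real"
  shows "(\<Sum>m\<in>UNIV. \<Sum>n\<in>UNIV. G m n * ((\<Sum>l\<in>UNIV. P l l m n) - (\<Sum>l\<in>UNIV. P n l m l)
          + (\<Sum>l\<in>UNIV. \<Sum>s\<in>UNIV. C l l s * C s m n - C l n s * C s m l)))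
    = (\<Sum>m\<in>UNIV. \<Sum>n\<in>UNIV. \<Sum>l\<in>UNIV. G m n * P l l m n) - (\<Sum>m\<in>UNIV. \<Sum>n\<in>UNIV. \<Sum>l\<in>UNIV. G m n * P n l m l)
      + trace_contraction - cross_contraction"
proof -
  have "(\<Sum>m\<in>UNIV. \<Sum>n\<in>UNIV. G m n * (\<Sum>l\<in>UNIV. \<Sum>s\<in>UNIV. C l l s * C s m n)) = trace_contraction"
    unfolding trace_contraction_def sum_distrib_left sum_distrib_right sum_nested4_eq_sum_tuple
    by (rule sum.reindex_bij_witness[where i="\<lambda>(m,n,l,s). (m,n,s,l)" and j="\<lambda>(m,n,l,s). (m,n,s,l)"])
      (auto simp: G_sym C_sym mult_ac)
  moreover have "(\<Sum>m\<in>UNIV. \<Sum>n\<in>UNIV. G m n * (\<Sum>l\<in>UNIV. \<Sum>s\<in>UNIV. C l n s * C s m l)) = cross_contraction"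
    unfolding cross_contraction_def sum_distrib_left by (simp add: mult_ac)
  ultimately show ?thesis
    by (simp add: sum_subtractf right_diff_distrib distrib_left sum.distrib sum_distrib_left)
qed

lemma C_dG_contraction:
  "(\<Sum>\<mu>\<in>UNIV. \<Sum>\<nu>\<in>UNIV. \<Sum>\<sigma>\<in>UNIV. C \<mu> \<nu> \<sigma> * dG \<mu> \<nu> \<sigma>) = - 2 * cross_contraction"
proof -
  have "(\<Sum>\<mu>\<in>UNIV. \<Sum>\<nu>\<in>UNIV. \<Sum>\<sigma>\<in>UNIV. \<Sum>c\<in>UNIV. C \<mu> \<nu> \<sigma> * (G \<nu> c * C \<sigma> \<mu> c)) = cross_contraction"
    unfolding cross_contraction_def sum_nested4_eq_sum_tuple
    by (rule sum.reindex_bij_witness[where i="\<lambda>(m,n,l,s). (s,m,l,n)" and j="\<lambda>(s,m,l,n). (m,n,l,s)"])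
      (auto simp: G_sym C_sym mult_ac)
  moreover have "(\<Sum>\<mu>\<in>UNIV. \<Sum>\<nu>\<in>UNIV. \<Sum>\<sigma>\<in>UNIV. \<Sum>c\<in>UNIV. C \<mu> \<nu> \<sigma> * (G \<sigma> c * C \<nu> \<mu> c)) = cross_contraction"
    unfolding cross_contraction_def sum_nested4_eq_sum_tuple
    by (rule sum.reindex_bij_witness[where i="\<lambda>(m,n,l,s). (s,l,m,n)" and j="\<lambda>(s,l,m,n). (m,n,l,s)"])
      (auto simp: G_sym C_sym mult_ac)
  moreover have "(\<Sum>\<mu>\<in>UNIV. \<Sum>\<nu>\<in>UNIV. \<Sum>\<sigma>\<in>UNIV. C \<mu> \<nu> \<sigma> * dG \<mu> \<nu> \<sigma>) =
      - ((\<Sum>\<mu>\<in>UNIV. \<Sum>\<nu>\<in>UNIV. \<Sum>\<sigma>\<in>UNIV. \<Sum>c\<in>UNIV. C \<mu> \<nu> \<sigma> * (G \<nu> c * C \<sigma> \<mu> c))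
       + (\<Sum>\<mu>\<in>UNIV. \<Sum>\<nu>\<in>UNIV. \<Sum>\<sigma>\<in>UNIV. \<Sum>c\<in>UNIV. C \<mu> \<nu> \<sigma> * (G \<sigma> c * C \<nu> \<mu> c)))"
    by (simp add: dG_eq sum_distrib_left distrib_left sum.distrib right_diff_distrib sum_subtractf sum_negf)
  ultimately show ?thesis
    by simp
qed

lemma trace_dG_contraction:
  "(\<Sum>\<mu>\<in>UNIV. \<Sum>\<nu>\<in>UNIV. \<Sum>\<sigma>\<in>UNIV. C \<nu> \<nu> \<sigma> * dG \<mu> \<sigma> \<mu>)
    = - (trace_trace_contraction + trace_contraction)"
proof -
  have "(\<Sum>\<mu>\<in>UNIV. \<Sum>\<nu>\<in>UNIV. \<Sum>\<sigma>\<in>UNIV. \<Sum>c\<in>UNIV. C \<nu> \<nu> \<sigma> * (G \<sigma> c * C \<mu> \<mu> c)) = trace_trace_contraction"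
    unfolding trace_trace_contraction_def sum_distrib_left sum_distrib_right sum_nested4_eq_sum_tuple
    by (rule sum.reindex_bij_witness[where i="\<lambda>(m,s,b,a). (a,b,s,m)" and j="\<lambda>(\<mu>,\<nu>,\<sigma>,c). (c,\<sigma>,\<nu>,\<mu>)"])
      (auto simp: G_sym C_sym mult_ac)
  moreover have "(\<Sum>\<mu>\<in>UNIV. \<Sum>\<nu>\<in>UNIV. \<Sum>\<sigma>\<in>UNIV. \<Sum>c\<in>UNIV. C \<nu> \<nu> \<sigma> * (G \<mu> c * C \<sigma> \<mu> c)) = trace_contraction"
    unfolding trace_contraction_def sum_distrib_left sum_distrib_right sum_nested4_eq_sum_tuple
    by (rule sum.reindex_bij_witness[where i="\<lambda>(m,n,s,l). (m,l,s,n)" and j="\<lambda>(m,l,s,n). (m,n,s,l)"])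
      (auto simp: G_sym C_sym mult_ac)
  moreover have "(\<Sum>\<mu>\<in>UNIV. \<Sum>\<nu>\<in>UNIV. \<Sum>\<sigma>\<in>UNIV. C \<nu> \<nu> \<sigma> * dG \<mu> \<sigma> \<mu>) =
      - ((\<Sum>\<mu>\<in>UNIV. \<Sum>\<nu>\<in>UNIV. \<Sum>\<sigma>\<in>UNIV. \<Sum>c\<in>UNIV. C \<nu> \<nu> \<sigma> * (G \<sigma> c * C \<mu> \<mu> c))
       + (\<Sum>\<mu>\<in>UNIV. \<Sum>\<nu>\<in>UNIV. \<Sum>\<sigma>\<in>UNIV. \<Sum>c\<in>UNIV. C \<nu> \<nu> \<sigma> * (G \<mu> c * C \<sigma> \<mu> c)))"
    by (simp add: dG_eq sum_distrib_left distrib_left sum.distrib right_diff_distrib sum_subtractf sum_negf)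
  ultimately show ?thesis
    by simp
qed

lemma divergence_contraction:
  fixes P :: "'n \<Rightarrow> 'n \<Rightarrow> 'n \<Rightarrow> 'n \<Rightarrow> real"
  assumes P_sym: "\<And>k l m n. P k l m n = P k l n m"
  shows "(\<Sum>\<mu>\<in>UNIV. (\<Sum>s\<in>UNIV. C s s \<mu>) * (\<Sum>\<nu>\<in>UNIV. \<Sum>\<sigma>\<in>UNIV. C \<mu> \<nu> \<sigma> * G \<nu> \<sigma> - C \<nu> \<nu> \<sigma> * G \<sigma> \<mu>)
          + (\<Sum>\<nu>\<in>UNIV. \<Sum>\<sigma>\<in>UNIV. P \<mu> \<mu> \<nu> \<sigma> * G \<nu> \<sigma> + C \<mu> \<nu> \<sigma> * dG \<mu> \<nu> \<sigma>
               - (P \<mu> \<nu> \<nu> \<sigma> * G \<sigma> \<mu> + C \<nu> \<nu> \<sigma> * dG \<mu> \<sigma> \<mu>)))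
    = (\<Sum>m\<in>UNIV. \<Sum>n\<in>UNIV. \<Sum>l\<in>UNIV. G m n * P l l m n) - (\<Sum>m\<in>UNIV. \<Sum>n\<in>UNIV. \<Sum>l\<in>UNIV. G m n * P n l m l)
      + 2 * trace_contraction - 2 * cross_contraction" (is "?lhs = _")
proof -
  have "(\<Sum>\<mu>\<in>UNIV. (\<Sum>s\<in>UNIV. C s s \<mu>) * (\<Sum>\<nu>\<in>UNIV. \<Sum>\<sigma>\<in>UNIV. C \<mu> \<nu> \<sigma> * G \<nu> \<sigma>)) = trace_contraction"
    unfolding trace_contraction_def sum_distrib_left sum_distrib_right sum_nested4_eq_sum_tuple
    by (rule sum.reindex_bij_witness[where i="\<lambda>(m,n,s,a). (s,m,n,a)" and j="\<lambda>(\<mu>,\<nu>,\<sigma>,a). (\<nu>,\<sigma>,\<mu>,a)"])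
      (auto simp: G_sym C_sym mult_ac)
  moreover have "(\<Sum>\<mu>\<in>UNIV. (\<Sum>s\<in>UNIV. C s s \<mu>) * (\<Sum>\<nu>\<in>UNIV. \<Sum>\<sigma>\<in>UNIV. C \<nu> \<nu> \<sigma> * G \<sigma> \<mu>)) = trace_trace_contraction"
    unfolding trace_trace_contraction_def sum_distrib_left sum_distrib_right sum_nested4_eq_sum_tuple
    by (rule sum.reindex_bij_witness[where i="\<lambda>(m,s,b,a). (m,b,s,a)" and j="\<lambda>(\<mu>,\<nu>,\<sigma>,a). (\<mu>,\<sigma>,\<nu>,a)"])
      (auto simp: G_sym C_sym mult_ac)
  moreover have "(\<Sum>\<mu>\<in>UNIV. \<Sum>\<nu>\<in>UNIV. \<Sum>\<sigma>\<in>UNIV. P \<mu> \<mu> \<nu> \<sigma> * G \<nu> \<sigma>) = (\<Sum>m\<in>UNIV. \<Sum>n\<in>UNIV. \<Sum>l\<in>UNIV. G m n * P l l m n)"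
    unfolding sum_nested3_eq_sum_tuple
    by (rule sum.reindex_bij_witness[where i="\<lambda>(m,n,l). (l,m,n)" and j="\<lambda>(l,m,n). (m,n,l)"])
      (auto simp: G_sym P_sym mult_ac)
  moreover have "(\<Sum>\<mu>\<in>UNIV. \<Sum>\<nu>\<in>UNIV. \<Sum>\<sigma>\<in>UNIV. P \<mu> \<nu> \<nu> \<sigma> * G \<sigma> \<mu>) = (\<Sum>m\<in>UNIV. \<Sum>n\<in>UNIV. \<Sum>l\<in>UNIV. G m n * P n l m l)"
    unfolding sum_nested3_eq_sum_tuple
    by (rule sum.reindex_bij_witness[where i="\<lambda>(m,n,l). (n,l,m)" and j="\<lambda>(n,l,m). (m,n,l)"])
      (auto simp: G_sym P_sym mult_ac)
  ultimately have "?lhs = (trace_contraction - trace_trace_contraction)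
      + ((\<Sum>m\<in>UNIV. \<Sum>n\<in>UNIV. \<Sum>l\<in>UNIV. G m n * P l l m n) + (- 2 * cross_contraction)
        - ((\<Sum>m\<in>UNIV. \<Sum>n\<in>UNIV. \<Sum>l\<in>UNIV. G m n * P n l m l) - (trace_trace_contraction + trace_contraction)))"
    using C_dG_contraction trace_dG_contraction
    by (simp add: sum_subtractf right_diff_distrib distrib_left sum.distrib)
  then show ?thesis
    by simp
qed

text \<open>The algebraic core of the identity between the \<open>\<Gamma>\<Gamma>\<close> Lagrangian and \<open>\<surd>|g| R\<close>: \<open>P k l m n\<close>
  stands for \<open>\<partial>\<^sub>k \<Gamma>\<^sup>l\<^sub>m\<^sub>n\<close>, and the subtracted term is the expanded divergence.\<close>

lemma gamma_gamma_eq_ricci_minus_divergence: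
  fixes P :: "'n \<Rightarrow> 'n \<Rightarrow> 'n \<Rightarrow> 'n \<Rightarrow> real"
  assumes "\<And>k l m n. P k l m n = P k l n m"
  shows "(\<Sum>\<mu>\<in>UNIV. \<Sum>\<nu>\<in>UNIV. G \<mu> \<nu> * (\<Sum>\<rho>\<in>UNIV. \<Sum>\<sigma>\<in>UNIV. C \<rho> \<mu> \<sigma> * C \<sigma> \<rho> \<nu> - C \<rho> \<mu> \<nu> * C \<sigma> \<rho> \<sigma>))
    = (\<Sum>m\<in>UNIV. \<Sum>n\<in>UNIV. G m n * ((\<Sum>l\<in>UNIV. P l l m n) - (\<Sum>l\<in>UNIV. P n l m l)
          + (\<Sum>l\<in>UNIV. \<Sum>s\<in>UNIV. C l l s * C s m n - C l n s * C s m l)))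
      - (\<Sum>\<mu>\<in>UNIV. (\<Sum>s\<in>UNIV. C s s \<mu>) * (\<Sum>\<nu>\<in>UNIV. \<Sum>\<sigma>\<in>UNIV. C \<mu> \<nu> \<sigma> * G \<nu> \<sigma> - C \<nu> \<nu> \<sigma> * G \<sigma> \<mu>)
          + (\<Sum>\<nu>\<in>UNIV. \<Sum>\<sigma>\<in>UNIV. P \<mu> \<mu> \<nu> \<sigma> * G \<nu> \<sigma> + C \<mu> \<nu> \<sigma> * dG \<mu> \<nu> \<sigma>
               - (P \<mu> \<nu> \<nu> \<sigma> * G \<sigma> \<mu> + C \<nu> \<nu> \<sigma> * dG \<mu> \<sigma> \<mu>)))"
  using gamma_gamma_contraction ricci_contraction[of P] divergence_contraction[of P, OF assms] by simp

lemma off_diagonal_inverse_metric_derivatives: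
  assumes G_diag: "\<And>a. G a a \<noteq> 0"
  shows "(\<Sum>\<nu>\<in>-{\<mu>}. dG \<nu> \<mu> \<nu> - G \<mu> \<nu> * (dG \<nu> \<mu> \<mu> / G \<mu> \<mu> + dG \<nu> \<nu> \<nu> / G \<nu> \<nu>) / 2)
    = - (\<Sum>a\<in>UNIV. \<Sum>b\<in>UNIV. G a b * C \<mu> a b) + (\<Sum>a\<in>UNIV. \<Sum>b\<in>UNIV. G \<mu> a * G \<mu> b * C \<mu> a b) / G \<mu> \<mu>
      - (\<Sum>a\<in>UNIV. \<Sum>b\<in>UNIV. G \<mu> b * C a a b) + (\<Sum>a\<in>UNIV. G \<mu> a / G a a * (\<Sum>b\<in>UNIV. G a b * C a a b))"
proof -
  define f where "f \<nu> = - (\<Sum>c\<in>UNIV. G \<nu> c * C \<mu> \<nu> c) + G \<mu> \<nu> / G \<mu> \<mu> * (\<Sum>c\<in>UNIV. G \<mu> c * C \<mu> \<nu> c)" for \<nu>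
  define h where "h \<nu> = - (\<Sum>c\<in>UNIV. G \<mu> c * C \<nu> \<nu> c) + G \<mu> \<nu> / G \<nu> \<nu> * (\<Sum>c\<in>UNIV. G \<nu> c * C \<nu> \<nu> c)" for \<nu>
  have summand: "dG \<nu> \<mu> \<nu> - G \<mu> \<nu> * (dG \<nu> \<mu> \<mu> / G \<mu> \<mu> + dG \<nu> \<nu> \<nu> / G \<nu> \<nu>) / 2 = f \<nu> + h \<nu>" for \<nu>
  proof -
    have e1: "dG \<nu> \<mu> \<nu> = - (\<Sum>c\<in>UNIV. G \<mu> c * C \<nu> \<nu> c) - (\<Sum>c\<in>UNIV. G \<nu> c * C \<mu> \<nu> c)"
      by (simp add: dG_eq sum.distrib C_sym[of \<mu>])
    have e2: "dG \<nu> \<mu> \<mu> = - 2 * (\<Sum>c\<in>UNIV. G \<mu> c * C \<mu> \<nu> c)"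
      by (simp add: dG_eq sum.distrib sum_distrib_left sum_negf)
    have e3: "dG \<nu> \<nu> \<nu> = - 2 * (\<Sum>c\<in>UNIV. G \<nu> c * C \<nu> \<nu> c)"
      by (simp add: dG_eq sum.distrib sum_distrib_left sum_negf)
    show ?thesis
      unfolding e1 e2 e3 f_def h_def by (simp add: field_simps)
  qed
  have "f \<mu> + h \<mu> = 0"
    unfolding f_def h_def using G_diag[of \<mu>] by (simp add: C_sym[of \<mu>])
  then have "(\<Sum>\<nu>\<in>-{\<mu>}. f \<nu> + h \<nu>) = (\<Sum>\<nu>\<in>UNIV. f \<nu> + h \<nu>)"
    by (simp add: sum.remove[of UNIV \<mu>] Compl_eq_Diff_UNIV)
  moreover have "(\<Sum>\<nu>\<in>UNIV. f \<nu>) = - (\<Sum>a\<in>UNIV. \<Sum>b\<in>UNIV. G a b * C \<mu> a b)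
      + (\<Sum>a\<in>UNIV. \<Sum>b\<in>UNIV. G \<mu> a * G \<mu> b * C \<mu> a b) / G \<mu> \<mu>"
    unfolding f_def by (simp add: sum.distrib sum_negf sum_divide_distrib sum_distrib_left sum_subtractf mult_ac)
  moreover have "(\<Sum>\<nu>\<in>UNIV. h \<nu>) = - (\<Sum>a\<in>UNIV. \<Sum>b\<in>UNIV. G \<mu> b * C a a b)
      + (\<Sum>a\<in>UNIV. G \<mu> a / G a a * (\<Sum>b\<in>UNIV. G a b * C a a b))"
    unfolding h_def by (simp add: sum.distrib sum_negf sum_subtractf)
  ultimately show ?thesis
    by (simp add: summand sum.distrib)
qed

text \<open>The algebraic core of the identity for \<open>\<surd>|\<gamma>(\<mu>)| K(\<mu>)\<close>: the left-hand side is
  \<open>\<surd>|g\<^sup>\<mu>\<^sup>\<mu>|\<close> times \<open>2 K(\<mu>)\<close>, the first sum on the right comes from the derivatives of the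
  angles \<open>\<alpha>(\<mu>\<nu>)\<close>, the second from the \<open>\<Gamma>\<Gamma>\<close> divergence term, and the third from the normal vectors.\<close>

lemma projected_christoffel_trace:
  assumes G_diag: "\<And>a. G a a \<noteq> 0"
  shows "-2 * (\<Sum>a\<in>UNIV. \<Sum>b\<in>UNIV. (G a b - G a \<mu> * G \<mu> b / G \<mu> \<mu>) * C \<mu> a b)
    = (\<Sum>\<nu>\<in>-{\<mu>}. dG \<nu> \<mu> \<nu> - G \<mu> \<nu> * (dG \<nu> \<mu> \<mu> / G \<mu> \<mu> + dG \<nu> \<nu> \<nu> / G \<nu> \<nu>) / 2)
      - (\<Sum>\<nu>\<in>UNIV. \<Sum>\<sigma>\<in>UNIV. C \<mu> \<nu> \<sigma> * G \<nu> \<sigma> - C \<nu> \<nu> \<sigma> * G \<sigma> \<mu>)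
      + (\<Sum>\<nu>\<in>UNIV. \<Sum>\<sigma>\<in>UNIV. G \<mu> \<sigma> * G \<mu> \<nu> * C \<mu> \<nu> \<sigma> / G \<mu> \<mu> - G \<nu> \<sigma> * G \<nu> \<mu> * C \<nu> \<nu> \<sigma> / G \<nu> \<nu>)"
proof -
  define K0 where "K0 = (\<Sum>a\<in>UNIV. \<Sum>b\<in>UNIV. G a b * C \<mu> a b)"
  define K1 where "K1 = (\<Sum>a\<in>UNIV. \<Sum>b\<in>UNIV. G \<mu> a * G \<mu> b * C \<mu> a b)"
  define H0 where "H0 = (\<Sum>a\<in>UNIV. \<Sum>b\<in>UNIV. G \<mu> b * C a a b)"
  define H1 where "H1 = (\<Sum>a\<in>UNIV. G \<mu> a / G a a * (\<Sum>b\<in>UNIV. G a b * C a a b))"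
  have S: "(\<Sum>\<nu>\<in>-{\<mu>}. dG \<nu> \<mu> \<nu> - G \<mu> \<nu> * (dG \<nu> \<mu> \<mu> / G \<mu> \<mu> + dG \<nu> \<nu> \<nu> / G \<nu> \<nu>) / 2)
      = - K0 + K1 / G \<mu> \<mu> - H0 + H1"
    unfolding K0_def K1_def H0_def H1_def by (rule off_diagonal_inverse_metric_derivatives[OF G_diag])
  have "(\<Sum>\<nu>\<in>UNIV. \<Sum>\<sigma>\<in>UNIV. C \<nu> \<nu> \<sigma> * G \<sigma> \<mu>) = H0"
    unfolding H0_def by (rule sum.cong[OF refl], rule sum.cong[OF refl]) (metis G_sym mult.commute)
  then have V: "(\<Sum>\<nu>\<in>UNIV. \<Sum>\<sigma>\<in>UNIV. C \<mu> \<nu> \<sigma> * G \<nu> \<sigma> - C \<nu> \<nu> \<sigma> * G \<sigma> \<mu>) = K0 - H0"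
    unfolding K0_def by (simp add: sum_subtractf mult.commute)
  have "(\<Sum>\<nu>\<in>UNIV. \<Sum>\<sigma>\<in>UNIV. G \<mu> \<sigma> * G \<mu> \<nu> * C \<mu> \<nu> \<sigma> / G \<mu> \<mu>) = K1 / G \<mu> \<mu>"
    unfolding K1_def sum_divide_distrib by (rule sum.cong[OF refl], rule sum.cong[OF refl]) (simp add: mult_ac)
  moreover have "(\<Sum>\<nu>\<in>UNIV. \<Sum>\<sigma>\<in>UNIV. G \<nu> \<sigma> * G \<nu> \<mu> * C \<nu> \<nu> \<sigma> / G \<nu> \<nu>) = H1"
    unfolding H1_def sum_distrib_left by (rule sum.cong[OF refl], rule sum.cong[OF refl])
      (metis G_sym mult.commute mult.left_commute times_divide_eq_left)
  ultimately have W: "(\<Sum>\<nu>\<in>UNIV. \<Sum>\<sigma>\<in>UNIV. G \<mu> \<sigma> * G \<mu> \<nu> * C \<mu> \<nu> \<sigma> / G \<mu> \<mu> - G \<nu> \<sigma> * G \<nu> \<mu> * C \<nu> \<nu> \<sigma> / G \<nu> \<nu>)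
      = K1 / G \<mu> \<mu> - H1"
    by (simp add: sum_subtractf)
  have "(\<Sum>a\<in>UNIV. \<Sum>b\<in>UNIV. G a \<mu> * G \<mu> b / G \<mu> \<mu> * C \<mu> a b) = K1 / G \<mu> \<mu>"
    unfolding K1_def sum_divide_distrib by (rule sum.cong[OF refl], rule sum.cong[OF refl])
      (metis G_sym mult.commute mult.left_commute times_divide_eq_left)
  then have L: "(\<Sum>a\<in>UNIV. \<Sum>b\<in>UNIV. (G a b - G a \<mu> * G \<mu> b / G \<mu> \<mu>) * C \<mu> a b) = K0 - K1 / G \<mu> \<mu>"
    unfolding K0_def by (simp add: sum_subtractf left_diff_distrib)
  show ?thesis
    unfolding S V W L by simp
qed

end

section \<open>Lorentzian metrics in a coordinate chart\<close>

definition gamma_current :: "(real^4 \<Rightarrow> real^4^4) \<Rightarrow> 4 \<Rightarrow> real^4 \<Rightarrow> real" where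
  "gamma_current g mu y = (\<Sum>nu\<in>UNIV. \<Sum>sig\<in>UNIV. Chr g mu nu sig y * ginv g y $ nu $ sig
                                          - Chr g nu nu sig y * ginv g y $ sig $ mu)"

definition normal_current :: "(real^4 \<Rightarrow> real^4^4) \<Rightarrow> 4 \<Rightarrow> 4 \<Rightarrow> real^4 \<Rightarrow> real" where
  "normal_current g mu nu y = (\<Sum>sig\<in>UNIV. xi mu * nvec g mu sig y * nvec g mu nu y * Chr g mu nu sig y
                                         - xi nu * nvec g nu sig y * nvec g nu mu y * Chr g nu nu sig y)"

lemma ratio_derivative_algebra:
  fixes P dc c e da db a b :: real
  assumes "P > 0"
  shows "dc * inverse (sqrt P) + c * (- (inverse (sqrt P) / 2 * inverse (sqrt P ^ 2)) * (e * da * b + e * a * db))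
     = dc / sqrt P - c * (e * (da * b + a * db)) / (2 * P * sqrt P)"
proof -
  have "sqrt P ^ 2 = P"
    using assms by simp
  then show ?thesis
    using assms by (simp add: field_simps)
qed

text \<open>The derivative of \<open>\<alpha>(\<mu>\<nu>)\<close> weighted by \<open>\<surd>|\<gamma>(\<mu>\<nu>)|\<close>, as a function of the entries
  \<open>a = g\<^sup>\<mu>\<^sup>\<mu>\<close>, \<open>b = g\<^sup>\<nu>\<^sup>\<nu>\<close>, \<open>c = g\<^sup>\<mu>\<^sup>\<nu>\<close> of the inverse metric, their derivatives \<open>da, db, dc\<close>,
  \<open>e = \<xi>(\<mu>)\<xi>(\<nu>)\<close> and \<open>d = det g\<close>.\<close>

lemma angle_derivative_algebra:
  fixes e a b c d da db dc :: real
  assumes e2: "e * e = 1" and P: "e * a * b > 0" and D: "e * (a * b - c * c) > 0"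
  shows "sqrt \<bar>d * (a * b - c * c)\<bar> *
      ((dc / sqrt (e * a * b) - c * (e * (da * b + a * db)) / (2 * (e * a * b) * sqrt (e * a * b)))
        / sqrt (1 - e * (c / sqrt (e * a * b))\<^sup>2))
    = sqrt \<bar>d\<bar> * (dc - c * (da / a + db / b) / 2)"
proof -
  define s where "s = sqrt (e * a * b)"
  define r where "r = sqrt (e * (a * b - c * c))"
  have s0: "s > 0" and ss: "s * s = e * a * b"
    unfolding s_def using P by simp_all
  have r0: "r > 0"
    unfolding r_def using D by simp
  have "e = 1 \<or> e = -1"
    using e2 by (metis mult_cancel_left1 square_eq_1_iff)
  then have "\<bar>a * b - c * c\<bar> = e * (a * b - c * c)"
    using D by (auto simp: abs_if)
  then have sq_gam: "sqrt \<bar>d * (a * b - c * c)\<bar> = sqrt \<bar>d\<bar> * r"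
    unfolding r_def by (simp add: abs_mult real_sqrt_mult)
  have "1 - e * (c / s)\<^sup>2 = (s * s - e * (c * c)) / (s * s)"
    using s0 by (simp add: field_simps power2_eq_square)
  also have "s * s - e * (c * c) = e * (a * b - c * c)"
    unfolding ss by (simp add: algebra_simps)
  finally have sq_q: "sqrt (1 - e * (c / s)\<^sup>2) = r / s"
    unfolding r_def using s0 by (simp add: real_sqrt_divide real_sqrt_mult_self)
  have "sqrt \<bar>d * (a * b - c * c)\<bar> *
      ((dc / s - c * (e * (da * b + a * db)) / (2 * (e * a * b) * s)) / sqrt (1 - e * (c / s)\<^sup>2))
      = sqrt \<bar>d\<bar> * (dc - c * (e * (da * b + a * db)) / (2 * (e * a * b)))"
  proof -
    have "dc / s - c * (e * (da * b + a * db)) / (2 * (e * a * b) * s)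
        = (dc - c * (e * (da * b + a * db)) / (2 * (e * a * b))) / s"
      by (simp add: diff_divide_distrib)
    then show ?thesis
      unfolding sq_gam sq_q using s0 r0 by simp
  qed
  also have "c * (e * (da * b + a * db)) / (2 * (e * a * b)) = c * (da / a + db / b) / 2"
  proof -
    have "e \<noteq> 0" "a \<noteq> 0" "b \<noteq> 0"
      using e2 P by auto
    then show ?thesis
      by (simp add: field_simps)
  qed
  finally show ?thesis
    unfolding s_def .
qed

locale lorentzian_chart =
  fixes g :: "real^4 \<Rightarrow> real^4^4" and U :: "(real^4) set"
  assumes open_U: "open U"
    and g_sym: "\<And>x mu nu. x \<in> U \<Longrightarrow> g x $ mu $ nu = g x $ nu $ mu"
    and g_smooth: "\<And>mu nu. smooth_on4 U (\<lambda>y. g y $ mu $ nu)"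
    and g_congruent_eta: "\<And>x. x \<in> U \<Longrightarrow> \<exists>P. invertible P \<and> transpose P ** g x ** P = eta"
    and ginv_00_neg: "\<And>x. x \<in> U \<Longrightarrow> ginv g x $ 0 $ 0 < 0"
    and ginv_spatial_diag_pos: "\<And>x i. x \<in> U \<Longrightarrow> i \<noteq> 0 \<Longrightarrow> ginv g x $ i $ i > 0"
    and qq_spatial_bound: "\<And>x i j. x \<in> U \<Longrightarrow> i \<noteq> 0 \<Longrightarrow> j \<noteq> 0 \<Longrightarrow> i \<noteq> j \<Longrightarrow> \<bar>qq g i j x\<bar> < 1"
begin

lemma det_g_neg: "x \<in> U \<Longrightarrow> det (g x) < 0"
  using g_congruent_eta det_neg_if_congruent_eta by blast

lemma invertible_g: "x \<in> U \<Longrightarrow> invertible (g x)"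
  using det_g_neg invertible_det_nz by force

lemma ginv_sym: "x \<in> U \<Longrightarrow> ginv g x $ a $ b = ginv g x $ b $ a"
  unfolding ginv_def using g_sym
  by (intro matrix_inv_symmetric invertible_g) (simp_all add: transpose_def vec_eq_iff)

lemma ginv_smooth: "smooth_on4 U (\<lambda>y. ginv g y $ a $ b)"
  unfolding ginv_def using det_g_neg by (intro smooth_on4_matrix_inv open_U g_smooth) force

lemma sqrtg_eq: "x \<in> U \<Longrightarrow> sqrtg g x = sqrt (- det (g x))"
  using det_g_neg unfolding sqrtg_def by (simp add: abs_of_neg)

lemma sqrtg_smooth: "smooth_on4 U (sqrtg g)"
proof (rule smooth_on4_cong[OF open_U])
  show "smooth_on4 U (\<lambda>y. sqrt (- det (g y)))"
    using det_g_neg by (intro smooth_on4_sqrt smooth_on4_cmult[of _ _ "-1", simplified] smooth_on4_det open_U g_smooth) auto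
qed (simp add: sqrtg_eq)

lemma Chr_smooth: "smooth_on4 U (Chr g l m n)"
  unfolding Chr_def[abs_def]
  by (intro smooth_on4_cmult smooth_on4_sum smooth_on4_mult smooth_on4_add smooth_on4_diff
      smooth_on4_pd open_U ginv_smooth g_smooth) auto

lemma pd_g_sym: "x \<in> U \<Longrightarrow> pd k (\<lambda>y. g y $ a $ b) x = pd k (\<lambda>y. g y $ b $ a) x"
  by (rule pd_cong_open[OF open_U]) (use g_sym in auto)

lemma Chr_sym: "x \<in> U \<Longrightarrow> Chr g l m n x = Chr g l n m x"
  unfolding Chr_def by (intro arg_cong[where f="\<lambda>t. 1/2 * t"] sum.cong refl) (simp add: pd_g_sym[of x _ m n])

lemma pd_Chr_sym: "x \<in> U \<Longrightarrow> pd k (Chr g l m n) x = pd k (Chr g l n m) x"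
  by (rule pd_cong_open[OF open_U]) (simp_all add: Chr_sym)

lemma pd_ginv:
  assumes "x \<in> U"
  shows "pd k (\<lambda>y. ginv g y $ a $ b) x
    = - (\<Sum>c\<in>UNIV. ginv g x $ a $ c * Chr g b k c x + ginv g x $ b $ c * Chr g a k c x)"
proof -
  have "(\<Sum>c\<in>UNIV. ginv g x $ a $ c * Chr g b k c x + ginv g x $ b $ c * Chr g a k c x)
      = (\<Sum>c\<in>UNIV. \<Sum>d\<in>UNIV. ginv g x $ a $ c * pd k (\<lambda>y. g y $ c $ d) x * ginv g x $ d $ b)"
    using assms
    by (intro christoffel_metric_compatibility[where D="\<lambda>k a b. pd k (\<lambda>y. g y $ a $ b) x"])
      (simp_all add: ginv_sym pd_g_sym Chr_def)
  moreover have "pd k (\<lambda>y. ginv g y $ a $ b) x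
      = - (\<Sum>c\<in>UNIV. \<Sum>d\<in>UNIV. ginv g x $ a $ c * pd k (\<lambda>y. g y $ c $ d) x * ginv g x $ d $ b)"
    unfolding ginv_def using assms
    by (intro pd_matrix_inv[OF open_U] invertible_g smooth_on4_differentiable[OF g_smooth]
        smooth_on4_differentiable[OF ginv_smooth[unfolded ginv_def]])
  ultimately show ?thesis
    by simp
qed

lemma pd_sqrtg:
  assumes "x \<in> U"
  shows "pd k (sqrtg g) x = sqrtg g x * (\<Sum>s\<in>UNIV. Chr g s s k x)"
proof -
  define D where "D = - det (g x)"
  define tr where "tr = (\<Sum>i\<in>UNIV. \<Sum>j\<in>UNIV. pd k (\<lambda>y. g y $ i $ j) x * ginv g x $ j $ i)"
  have pos: "D > 0"
    using det_g_neg[OF assms] by (simp add: D_def)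
  have det_diff: "(\<lambda>y. det (g y)) differentiable (at x)"
    using smooth_on4_differentiable[OF smooth_on4_det[OF open_U g_smooth] assms] .
  have "pd k (\<lambda>y. det (g y)) x = det (g x) * tr"
    unfolding tr_def ginv_def
    by (rule pd_det[OF smooth_on4_differentiable[OF g_smooth assms] invertible_g[OF assms]])
  then have "pd k (\<lambda>y. - det (g y)) x = D * tr"
    using pd_cmult[OF det_diff, of k "-1"] by (simp only: mult_minus1 D_def mult_minus_left mult_1)
  have "pd k (sqrtg g) x = pd k (\<lambda>y. sqrt (- det (g y))) x"
    by (rule pd_cong_open[OF open_U assms]) (simp add: sqrtg_eq)
  also have "\<dots> = inverse (sqrt D) / 2 * pd k (\<lambda>y. - det (g y)) x"
    unfolding D_def using pos[unfolded D_def]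
    by (rule pd_comp[OF differentiable_minus[OF det_diff] DERIV_real_sqrt])
  also have "\<dots> = inverse (sqrt D) / 2 * (D * tr)"
    by (simp only: \<open>pd k (\<lambda>y. - det (g y)) x = D * tr\<close>)
  also have "\<dots> = D / sqrt D * (1/2 * tr)"
    by (simp add: field_simps)
  also have "D / sqrt D = sqrtg g x"
    using real_div_sqrt[of D] pos sqrtg_eq[OF assms] by (simp add: D_def)
  also have "1/2 * tr = (\<Sum>s\<in>UNIV. Chr g s s k x)"
    unfolding tr_def using assms christoffel_trace[where G="\<lambda>a b. ginv g x $ a $ b" and C="\<lambda>l m n. Chr g l m n x"
        and D="\<lambda>k a b. pd k (\<lambda>y. g y $ a $ b) x"]
    by (simp add: ginv_sym Chr_def)
  finally show ?thesis .
qed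

lemma connection_algebra_at:
  "x \<in> U \<Longrightarrow> connection_algebra (\<lambda>a b. ginv g x $ a $ b) (\<lambda>l m n. Chr g l m n x)
    (\<lambda>k a b. pd k (\<lambda>y. ginv g y $ a $ b) x)"
  by unfold_locales (simp_all add: ginv_sym Chr_sym pd_ginv)

lemma gamma_current_smooth: "smooth_on4 U (gamma_current g mu)"
  unfolding gamma_current_def[abs_def]
  by (intro smooth_on4_sum smooth_on4_diff smooth_on4_mult Chr_smooth ginv_smooth open_U) auto

lemma pd_gamma_current:
  assumes "x \<in> U"
  shows "pd mu (gamma_current g mu) x
    = (\<Sum>nu\<in>UNIV. \<Sum>sig\<in>UNIV. pd mu (Chr g mu nu sig) x * ginv g x $ nu $ sig
          + Chr g mu nu sig x * pd mu (\<lambda>y. ginv g y $ nu $ sig) x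
        - (pd mu (Chr g nu nu sig) x * ginv g x $ sig $ mu
          + Chr g nu nu sig x * pd mu (\<lambda>y. ginv g y $ sig $ mu) x))"
  using assms unfolding gamma_current_def[abs_def]
  by (simp add: pd_sum pd_diff pd_mult smooth_on4_differentiable[OF Chr_smooth]
      smooth_on4_differentiable[OF ginv_smooth] smooth_on4_differentiable[OF smooth_on4_sum]
      smooth_on4_sum smooth_on4_diff smooth_on4_mult open_U Chr_smooth ginv_smooth)

lemma pd_sqrtg_gamma_current:
  assumes "x \<in> U"
  shows "pd mu (\<lambda>y. sqrtg g y * gamma_current g mu y) x
    = sqrtg g x * ((\<Sum>s\<in>UNIV. Chr g s s mu x) * gamma_current g mu x + pd mu (gamma_current g mu) x)"
  using assms
  by (simp add: pd_mult smooth_on4_differentiable[OF sqrtg_smooth]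
      smooth_on4_differentiable[OF gamma_current_smooth] pd_sqrtg algebra_simps)

lemma LGamma_eq_sqrtg_Rscal_minus_divergence:
  assumes "x \<in> U"
  shows "LGamma g x = sqrtg g x * Rscal g x - (\<Sum>mu\<in>UNIV. pd mu (\<lambda>y. sqrtg g y * gamma_current g mu y) x)"
proof -
  interpret connection_algebra "\<lambda>a b. ginv g x $ a $ b" "\<lambda>l m n. Chr g l m n x" "\<lambda>k a b. pd k (\<lambda>y. ginv g y $ a $ b) x"
    by (rule connection_algebra_at[OF assms])
  have "(\<Sum>mu\<in>UNIV. pd mu (\<lambda>y. sqrtg g y * gamma_current g mu y) x)
      = sqrtg g x * (\<Sum>\<mu>\<in>UNIV. (\<Sum>s\<in>UNIV. Chr g s s \<mu> x) * gamma_current g \<mu> x + pd \<mu> (gamma_current g \<mu>) x)"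
    using assms by (simp add: pd_sqrtg_gamma_current sum_distrib_left)
  then show ?thesis
    using assms gamma_gamma_eq_ricci_minus_divergence[of "\<lambda>k l m n. pd k (Chr g l m n) x"]
    unfolding LGamma_def Rscal_def Ricci_def
    by (simp add: pd_Chr_sym pd_gamma_current gamma_current_def right_diff_distrib sum_distrib_left)
qed

lemma xi_mult_ginv_diag:
  assumes "x \<in> U"
  shows "xi a * ginv g x $ a $ a = \<bar>ginv g x $ a $ a\<bar>"
  using ginv_00_neg[OF assms] ginv_spatial_diag_pos[OF assms, of a] by (cases "a = 0") (simp_all add: xi_def)

lemma ginv_diag_nonzero:
  assumes "x \<in> U"
  shows "ginv g x $ a $ a \<noteq> 0"
  using ginv_00_neg[OF assms] ginv_spatial_diag_pos[OF assms, of a] by (cases "a = 0") simp_all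

lemma ginv_diag_product_pos: "x \<in> U \<Longrightarrow> xi mu * xi nu * ginv g x $ mu $ mu * ginv g x $ nu $ nu > 0"
  using xi_mult_ginv_diag[of x mu] xi_mult_ginv_diag[of x nu] ginv_diag_nonzero[of x mu] ginv_diag_nonzero[of x nu]
  by (metis mult.assoc mult.left_commute zero_less_abs_iff zero_less_mult_iff)

lemma ginv_minor_pos:
  assumes x: "x \<in> U" and "mu \<noteq> nu"
  shows "xi mu * xi nu * (ginv g x $ mu $ mu * ginv g x $ nu $ nu - ginv g x $ mu $ nu * ginv g x $ mu $ nu) > 0"
proof (cases "mu = 0 \<or> nu = 0")
  case True
  then have "xi mu * xi nu = -1" "ginv g x $ mu $ mu * ginv g x $ nu $ nu < 0"
    using assms ginv_00_neg[OF x] ginv_spatial_diag_pos[OF x]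
    by (auto simp: xi_def mult_neg_pos mult_pos_neg)
  moreover have "ginv g x $ mu $ nu * ginv g x $ mu $ nu \<ge> 0"
    by simp
  ultimately have "ginv g x $ mu $ mu * ginv g x $ nu $ nu - ginv g x $ mu $ nu * ginv g x $ mu $ nu < 0"
    by linarith
  with \<open>xi mu * xi nu = -1\<close> show ?thesis
    by simp
next
  case False
  let ?a = "ginv g x $ mu $ mu" and ?b = "ginv g x $ nu $ nu" and ?c = "ginv g x $ mu $ nu"
  have xi: "xi mu * xi nu = 1"
    using False by (simp add: xi_def)
  have P: "?a * ?b > 0"
    using ginv_diag_product_pos[OF x, of mu nu] xi by (simp add: mult.assoc)
  have "\<bar>?c\<bar> / sqrt (?a * ?b) < 1"
    using qq_spatial_bound[OF x, of mu nu] False assms(2) xi real_sqrt_ge_zero[OF less_imp_le[OF P]]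
    by (simp add: qq_def mult.assoc abs_divide)
  then have "\<bar>?c\<bar> < sqrt (?a * ?b)"
    using P by (simp add: divide_less_eq)
  then have "\<bar>?c\<bar> * \<bar>?c\<bar> < sqrt (?a * ?b) * sqrt (?a * ?b)"
    using P by (intro mult_strict_mono) simp_all
  then show ?thesis
    using P xi by simp
qed

lemma gam1_eq: "x \<in> U \<Longrightarrow> gam1 g mu x = det (g x) * ginv g x $ mu $ mu"
  unfolding gam1_def ginv_def using jacobi_complementary_minor[OF invertible_g, of x "{mu}"]
  by (simp add: subdet_singleton)

lemma gam2_eq:
  assumes "x \<in> U" "mu \<noteq> nu"
  shows "gam2 g mu nu x
    = det (g x) * (ginv g x $ mu $ mu * ginv g x $ nu $ nu - ginv g x $ mu $ nu * ginv g x $ mu $ nu)"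
  using jacobi_complementary_minor[OF invertible_g[OF assms(1)], of "{mu, nu}"]
    subdet_doubleton[OF assms(2), of "ginv g x"] ginv_sym[OF assms(1), of nu mu]
  by (simp add: gam2_def ginv_def)

lemma gam2_nonzero: "x \<in> U \<Longrightarrow> mu \<noteq> nu \<Longrightarrow> gam2 g mu nu x \<noteq> 0"
  using gam2_eq ginv_minor_pos det_g_neg by (metis less_irrefl mult_eq_0_iff)

lemma sqrt_gam2_smooth: "mu \<noteq> nu \<Longrightarrow> smooth_on4 U (\<lambda>y. sqrt \<bar>gam2 g mu nu y\<bar>)"
  unfolding gam2_def using gam2_nonzero[unfolded gam2_def]
  by (intro smooth_on4_sqrt smooth_on4_abs smooth_on4_subdet open_U g_smooth) auto

lemma ginv_diag_product_smooth:
  "smooth_on4 U (\<lambda>y. xi mu * xi nu * ginv g y $ mu $ mu * ginv g y $ nu $ nu)"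
  by (intro smooth_on4_mult smooth_on4_cmult ginv_smooth open_U)

lemma qq_smooth: "smooth_on4 U (qq g mu nu)"
proof -
  have "sqrt (xi mu * xi nu * ginv g x $ mu $ mu * ginv g x $ nu $ nu) \<noteq> 0" if "x \<in> U" for x
    using ginv_diag_product_pos[OF that, of mu nu] by (metis less_irrefl real_sqrt_eq_zero_cancel_iff)
  then show ?thesis
    unfolding qq_def[abs_def]
    by (intro smooth_on4_divide smooth_on4_sqrt ginv_diag_product_smooth ginv_smooth open_U ginv_diag_product_pos)
qed

lemma alpha_smooth: "mu \<noteq> nu \<Longrightarrow> smooth_on4 U (alpha g mu nu)"
  unfolding alpha_def[abs_def] using qq_spatial_bound
  by (cases "mu = 0 \<or> nu = 0") (auto intro: smooth_on4_arsinh smooth_on4_arcsin open_U qq_smooth)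

lemma nvec_smooth: "smooth_on4 U (nvec g a b)"
  unfolding nvec_def[abs_def] using ginv_diag_nonzero
  by (intro smooth_on4_divide smooth_on4_cmult smooth_on4_sqrt smooth_on4_abs ginv_smooth open_U) auto

lemma pd_qq:
  assumes "x \<in> U"
  shows "pd k (qq g mu nu) x =
    pd k (\<lambda>y. ginv g y $ mu $ nu) x / sqrt (xi mu * xi nu * ginv g x $ mu $ mu * ginv g x $ nu $ nu)
    - ginv g x $ mu $ nu * (xi mu * xi nu * (pd k (\<lambda>y. ginv g y $ mu $ mu) x * ginv g x $ nu $ nu
          + ginv g x $ mu $ mu * pd k (\<lambda>y. ginv g y $ nu $ nu) x))
      / (2 * (xi mu * xi nu * ginv g x $ mu $ mu * ginv g x $ nu $ nu)
           * sqrt (xi mu * xi nu * ginv g x $ mu $ mu * ginv g x $ nu $ nu))"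
proof -
  define P where "P = (\<lambda>y. xi mu * xi nu * ginv g y $ mu $ mu * ginv g y $ nu $ nu)"
  have P_pos: "P x > 0"
    unfolding P_def by (rule ginv_diag_product_pos[OF assms])
  have P_diff: "P differentiable (at x)"
    unfolding P_def using smooth_on4_differentiable[OF ginv_diag_product_smooth assms] .
  have "sqrt (P y) \<noteq> 0" if "y \<in> U" for y
    unfolding P_def using ginv_diag_product_pos[OF that, of mu nu]
    by (metis less_irrefl real_sqrt_eq_zero_cancel_iff)
  then have "smooth_on4 U (\<lambda>y. inverse (sqrt (P y)))"
    unfolding P_def
    by (intro smooth_on4_inverse smooth_on4_sqrt ginv_diag_product_smooth open_U ginv_diag_product_pos)
  then have inv_sqrt_P_diff: "(\<lambda>y. inverse (sqrt (P y))) differentiable (at x)"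
    using smooth_on4_differentiable assms by blast
  have "((\<lambda>t. inverse (sqrt t)) has_real_derivative - (inverse (sqrt (P x)) / 2 * inverse (sqrt (P x) ^ 2))) (at (P x))"
    using DERIV_inverse_fun[OF DERIV_real_sqrt[OF P_pos]] P_pos by (simp add: numeral_2_eq_2)
  then have "pd k (\<lambda>y. inverse (sqrt (P y))) x
      = - (inverse (sqrt (P x)) / 2 * inverse (sqrt (P x) ^ 2)) * pd k P x"
    by (rule pd_comp[OF P_diff])
  moreover have "pd k P x = xi mu * xi nu * pd k (\<lambda>y. ginv g y $ mu $ mu) x * ginv g x $ nu $ nu
       + xi mu * xi nu * ginv g x $ mu $ mu * pd k (\<lambda>y. ginv g y $ nu $ nu) x"
    unfolding P_def using assms
    by (simp add: pd_mult pd_const smooth_on4_differentiable[OF ginv_smooth] differentiable_mult)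
  moreover have "qq g mu nu = (\<lambda>y. ginv g y $ mu $ nu * inverse (sqrt (P y)))"
    unfolding qq_def P_def by (simp add: divide_inverse)
  ultimately have "pd k (qq g mu nu) x = pd k (\<lambda>y. ginv g y $ mu $ nu) x * inverse (sqrt (P x))
      + ginv g x $ mu $ nu * (- (inverse (sqrt (P x)) / 2 * inverse (sqrt (P x) ^ 2)) *
         (xi mu * xi nu * pd k (\<lambda>y. ginv g y $ mu $ mu) x * ginv g x $ nu $ nu
       + xi mu * xi nu * ginv g x $ mu $ mu * pd k (\<lambda>y. ginv g y $ nu $ nu) x))"
    using pd_mult[OF smooth_on4_differentiable[OF ginv_smooth assms] inv_sqrt_P_diff] by simp
  then show ?thesis
    using ratio_derivative_algebra[OF P_pos, of "pd k (\<lambda>y. ginv g y $ mu $ nu) x" "ginv g x $ mu $ nu"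
        "xi mu * xi nu" "pd k (\<lambda>y. ginv g y $ mu $ mu) x" "ginv g x $ nu $ nu" "ginv g x $ mu $ mu"
        "pd k (\<lambda>y. ginv g y $ nu $ nu) x"]
    by (simp add: P_def mult.assoc)
qed

lemma pd_alpha:
  assumes "x \<in> U" "mu \<noteq> nu"
  shows "pd k (alpha g mu nu) x = pd k (qq g mu nu) x / sqrt (1 - xi mu * xi nu * (qq g mu nu x)\<^sup>2)"
proof (cases "mu = 0 \<or> nu = 0")
  case True
  then have "alpha g mu nu = (\<lambda>y. arsinh (qq g mu nu y))" "xi mu * xi nu = -1"
    using assms(2) by (auto simp: alpha_def xi_def)
  moreover have "pd k (\<lambda>y. arsinh (qq g mu nu y)) x = 1 / sqrt ((qq g mu nu x)\<^sup>2 + 1) * pd k (qq g mu nu) x"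
    by (rule pd_comp[OF smooth_on4_differentiable[OF qq_smooth assms(1)] arsinh_real_has_field_derivative])
  ultimately show ?thesis
    by (simp add: add.commute)
next
  case False
  then have "alpha g mu nu = (\<lambda>y. arcsin (qq g mu nu y))" "xi mu * xi nu = 1"
    by (auto simp: alpha_def xi_def)
  moreover have "\<bar>qq g mu nu x\<bar> < 1"
    using qq_spatial_bound[OF assms(1)] False assms(2) by simp
  then have "pd k (\<lambda>y. arcsin (qq g mu nu y)) x = inverse (sqrt (1 - (qq g mu nu x)\<^sup>2)) * pd k (qq g mu nu) x"
    by (intro pd_comp[OF smooth_on4_differentiable[OF qq_smooth assms(1)]] DERIV_arcsin) (auto simp: abs_less_iff)
  ultimately show ?thesis
    by (simp add: divide_inverse mult.commute)
qed

lemma sqrt_gam2_mult_pd_alpha: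
  assumes "x \<in> U" "mu \<noteq> nu"
  shows "sqrt \<bar>gam2 g mu nu x\<bar> * pd nu (alpha g mu nu) x =
    sqrtg g x * (pd nu (\<lambda>y. ginv g y $ mu $ nu) x
      - ginv g x $ mu $ nu * (pd nu (\<lambda>y. ginv g y $ mu $ mu) x / ginv g x $ mu $ mu
                              + pd nu (\<lambda>y. ginv g y $ nu $ nu) x / ginv g x $ nu $ nu) / 2)"
  using angle_derivative_algebra[of "xi mu * xi nu", OF _ ginv_diag_product_pos[OF assms(1)]
      ginv_minor_pos[OF assms], of "det (g x)"]
  unfolding gam2_eq[OF assms] pd_alpha[OF assms] pd_qq[OF assms(1)] qq_def sqrtg_def
  by (simp add: xi_def)

lemma xi_nvec_nvec:
  assumes "x \<in> U"
  shows "xi a * nvec g a s x * nvec g a n x = ginv g x $ a $ s * ginv g x $ a $ n / ginv g x $ a $ a"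
proof -
  have "xi a * xi a = 1" "xi a \<noteq> 0"
    by (simp_all add: xi_def)
  moreover have "\<bar>ginv g x $ a $ a\<bar> = xi a * ginv g x $ a $ a"
    using xi_mult_ginv_diag[OF assms] by simp
  ultimately show ?thesis
    unfolding nvec_def using ginv_diag_nonzero[OF assms, of a]
    by (simp add: field_simps)
qed

lemma sqrt_gam1_mult_Ktr:
  assumes "x \<in> U"
  shows "sqrt \<bar>gam1 g mu x\<bar> * Ktr g mu x =
    1/2 * ((\<Sum>nu\<in>-{mu}. sqrt \<bar>gam2 g mu nu x\<bar> * pd nu (alpha g mu nu) x)
      - sqrtg g x * gamma_current g mu x + (\<Sum>nu\<in>UNIV. sqrtg g x * normal_current g mu nu x))"
proof -
  interpret connection_algebra "\<lambda>a b. ginv g x $ a $ b" "\<lambda>l m n. Chr g l m n x" "\<lambda>k a b. pd k (\<lambda>y. ginv g y $ a $ b) x"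
    by (rule connection_algebra_at[OF assms])
  let ?G = "\<lambda>a b. ginv g x $ a $ b"
  let ?h = "\<lambda>a b. (?G a b - ?G a mu * ?G mu b / ?G mu mu) * Chr g mu a b x"
  have G_diag: "?G a a \<noteq> 0" for a
    by (rule ginv_diag_nonzero[OF assms])
  have "Ktr g mu x = - (\<Sum>a\<in>-{mu}. \<Sum>b\<in>-{mu}. ?h a b) / sqrt \<bar>?G mu mu\<bar>"
    unfolding Ktr_def gam1inv_def Kab_def by (simp add: sum_divide_distrib sum_negf)
  also have "(\<Sum>a\<in>-{mu}. \<Sum>b\<in>-{mu}. ?h a b) = (\<Sum>a\<in>UNIV. \<Sum>b\<in>UNIV. ?h a b)"
    using G_diag[of mu] by (simp add: Compl_eq_Diff_UNIV sum_diff1)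
  finally have "sqrt \<bar>gam1 g mu x\<bar> * Ktr g mu x = - sqrtg g x * (\<Sum>a\<in>UNIV. \<Sum>b\<in>UNIV. ?h a b)"
    using G_diag[of mu] unfolding gam1_eq[OF assms] sqrtg_def by (simp add: abs_mult real_sqrt_mult)
  moreover have "(\<Sum>nu\<in>-{mu}. sqrt \<bar>gam2 g mu nu x\<bar> * pd nu (alpha g mu nu) x) =
      sqrtg g x * (\<Sum>\<nu>\<in>-{mu}. pd \<nu> (\<lambda>y. ginv g y $ mu $ \<nu>) x
        - ?G mu \<nu> * (pd \<nu> (\<lambda>y. ginv g y $ mu $ mu) x / ?G mu mu + pd \<nu> (\<lambda>y. ginv g y $ \<nu> $ \<nu>) x / ?G \<nu> \<nu>) / 2)"
    unfolding sum_distrib_left using assms by (intro sum.cong refl) (simp add: sqrt_gam2_mult_pd_alpha)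
  moreover have "(\<Sum>nu\<in>UNIV. sqrtg g x * normal_current g mu nu x) =
      sqrtg g x * (\<Sum>\<nu>\<in>UNIV. \<Sum>\<sigma>\<in>UNIV. ?G mu \<sigma> * ?G mu \<nu> * Chr g mu \<nu> \<sigma> x / ?G mu mu
                                  - ?G \<nu> \<sigma> * ?G \<nu> mu * Chr g \<nu> \<nu> \<sigma> x / ?G \<nu> \<nu>)"
    unfolding sum_distrib_left normal_current_def using assms by (simp add: xi_nvec_nvec)
  ultimately show ?thesis
    using projected_christoffel_trace[OF G_diag, of mu] unfolding gamma_current_def
    by (simp add: algebra_simps)
qed

lemma normal_current_smooth: "smooth_on4 U (normal_current g mu nu)"
  unfolding normal_current_def[abs_def]
  by (intro smooth_on4_sum smooth_on4_diff smooth_on4_mult smooth_on4_const Chr_smooth nvec_smooth open_U) auto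

lemma pd_pd_sqrt_gam2_mult_alpha:
  assumes "x \<in> U" "mu \<noteq> nu"
  shows "pd mu (pd nu (\<lambda>y. sqrt \<bar>gam2 g mu nu y\<bar> * alpha g mu nu y)) x
    = pd mu (\<lambda>y. alpha g mu nu y * pd nu (\<lambda>z. sqrt \<bar>gam2 g mu nu z\<bar>) y) x
      + pd mu (\<lambda>y. sqrt \<bar>gam2 g mu nu y\<bar> * pd nu (alpha g mu nu) y) x"
proof -
  have "pd mu (pd nu (\<lambda>y. sqrt \<bar>gam2 g mu nu y\<bar> * alpha g mu nu y)) x
      = pd mu (\<lambda>y. alpha g mu nu y * pd nu (\<lambda>z. sqrt \<bar>gam2 g mu nu z\<bar>) y
                 + sqrt \<bar>gam2 g mu nu y\<bar> * pd nu (alpha g mu nu) y) x"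
    using assms
    by (intro pd_cong_open[OF open_U])
      (simp_all add: pd_mult smooth_on4_differentiable[OF sqrt_gam2_smooth] smooth_on4_differentiable[OF alpha_smooth])
  also have "\<dots> = pd mu (\<lambda>y. alpha g mu nu y * pd nu (\<lambda>z. sqrt \<bar>gam2 g mu nu z\<bar>) y) x
      + pd mu (\<lambda>y. sqrt \<bar>gam2 g mu nu y\<bar> * pd nu (alpha g mu nu) y) x"
    using assms
    by (intro pd_add smooth_on4_differentiable[of U] smooth_on4_mult smooth_on4_pd alpha_smooth
        sqrt_gam2_smooth open_U)
  finally show ?thesis .
qed

lemma pd_sqrt_gam1_mult_Ktr:
  assumes "x \<in> U"
  shows "pd mu (\<lambda>y. sqrt \<bar>gam1 g mu y\<bar> * Ktr g mu y) x =
    1/2 * ((\<Sum>nu\<in>-{mu}. pd mu (\<lambda>y. sqrt \<bar>gam2 g mu nu y\<bar> * pd nu (alpha g mu nu) y) x)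
      - pd mu (\<lambda>y. sqrtg g y * gamma_current g mu y) x
      + (\<Sum>nu\<in>UNIV. pd mu (\<lambda>y. sqrtg g y * normal_current g mu nu y) x))"
proof -
  define S where "S nu y = sqrt \<bar>gam2 g mu nu y\<bar> * pd nu (alpha g mu nu) y" for nu y
  define V where "V y = sqrtg g y * gamma_current g mu y" for y
  define W where "W nu y = sqrtg g y * normal_current g mu nu y" for nu y
  have S_diff: "S nu differentiable (at x)" if "nu \<in> -{mu}" for nu
    unfolding S_def[abs_def] using that assms
    by (intro smooth_on4_differentiable[of U] smooth_on4_mult smooth_on4_pd alpha_smooth sqrt_gam2_smooth open_U) auto
  have V_diff: "V differentiable (at x)"
    unfolding V_def[abs_def] using assms
    by (intro smooth_on4_differentiable[of U] smooth_on4_mult sqrtg_smooth gamma_current_smooth open_U)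
  have W_diff: "W nu differentiable (at x)" for nu
    unfolding W_def[abs_def] using assms
    by (intro smooth_on4_differentiable[of U] smooth_on4_mult sqrtg_smooth normal_current_smooth open_U)
  have pd_sum_S: "pd mu (\<lambda>y. \<Sum>nu\<in>-{mu}. S nu y) x = (\<Sum>nu\<in>-{mu}. pd mu (S nu) x)"
    by (rule pd_sum) (use S_diff in auto)
  have "pd mu (\<lambda>y. sqrt \<bar>gam1 g mu y\<bar> * Ktr g mu y) x
      = pd mu (\<lambda>y. 1/2 * ((\<Sum>nu\<in>-{mu}. S nu y) - V y + (\<Sum>nu\<in>UNIV. W nu y))) x"
    by (rule pd_cong_open[OF open_U assms]) (simp add: sqrt_gam1_mult_Ktr S_def V_def W_def)
  also have "\<dots> = 1/2 * ((\<Sum>nu\<in>-{mu}. pd mu (S nu) x) - pd mu V x + (\<Sum>nu\<in>UNIV. pd mu (W nu) x))"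
    using S_diff V_diff W_diff
    by (simp add: pd_sum_S pd_cmult pd_add pd_diff pd_sum differentiable_sum del: times_divide_eq_left)
  finally show ?thesis
    by (simp add: S_def[abs_def] V_def[abs_def] W_def[abs_def])
qed

lemma twice_pd_K_minus_pd_pd_alpha:
  assumes "x \<in> U"
  shows "2 * pd mu (\<lambda>y. sqrt \<bar>gam1 g mu y\<bar> * Ktr g mu y) x
      - (\<Sum>nu\<in>-{mu}. pd mu (pd nu (\<lambda>y. sqrt \<bar>gam2 g mu nu y\<bar> * alpha g mu nu y)) x)
    = - pd mu (\<lambda>y. sqrtg g y * gamma_current g mu y) x
      - (\<Sum>nu\<in>-{mu}. pd mu (\<lambda>y. alpha g mu nu y * pd nu (\<lambda>z. sqrt \<bar>gam2 g mu nu z\<bar>) y) x)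
      + (\<Sum>nu\<in>UNIV. pd mu (\<lambda>y. sqrtg g y * normal_current g mu nu y) x)"
proof -
  have "(\<Sum>nu\<in>-{mu}. pd mu (pd nu (\<lambda>y. sqrt \<bar>gam2 g mu nu y\<bar> * alpha g mu nu y)) x)
      = (\<Sum>nu\<in>-{mu}. pd mu (\<lambda>y. alpha g mu nu y * pd nu (\<lambda>z. sqrt \<bar>gam2 g mu nu z\<bar>) y) x)
        + (\<Sum>nu\<in>-{mu}. pd mu (\<lambda>y. sqrt \<bar>gam2 g mu nu y\<bar> * pd nu (alpha g mu nu) y) x)"
    using assms by (simp add: pd_pd_sqrt_gam2_mult_alpha sum.distrib)
  then show ?thesis
    using pd_sqrt_gam1_mult_Ktr[OF assms, of mu] by (simp add: algebra_simps)
qed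

theorem LK_eq_LGamma_plus_divergences:
  assumes "x \<in> U"
  shows "LK g x = LGamma g x
    - (\<Sum>mu\<in>UNIV. \<Sum>nu\<in>-{mu}. pd mu (\<lambda>y. alpha g mu nu y * pd nu (\<lambda>z. sqrt \<bar>gam2 g mu nu z\<bar>) y) x)
    + (\<Sum>mu\<in>UNIV. \<Sum>nu\<in>UNIV. pd mu (\<lambda>y. sqrtg g y * normal_current g mu nu y) x)"
proof -
  have "LK g x = sqrtg g x * Rscal g x
      + (\<Sum>mu\<in>UNIV. 2 * pd mu (\<lambda>y. sqrt \<bar>gam1 g mu y\<bar> * Ktr g mu y) x
          - (\<Sum>nu\<in>-{mu}. pd mu (pd nu (\<lambda>y. sqrt \<bar>gam2 g mu nu y\<bar> * alpha g mu nu y)) x))"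
    unfolding LK_def by (simp add: sum_distrib_left sum_subtractf)
  then show ?thesis
    unfolding twice_pd_K_minus_pd_pd_alpha[OF assms] LGamma_eq_sqrtg_Rscal_minus_divergence[OF assms]
    by (simp add: sum.distrib sum_subtractf sum_negf)
qed

end

theorem mainTheorem7:
  fixes g :: "real^4 \<Rightarrow> real^4^4" and U :: "(real^4) set"
  assumes "open U"
    and "\<And>x mu nu. x \<in> U \<Longrightarrow> g x $ mu $ nu = g x $ nu $ mu"
    and "\<And>mu nu. smooth_on4 U (\<lambda>y. g y $ mu $ nu)"
    and "\<And>x. x \<in> U \<Longrightarrow> \<exists>P. invertible P \<and> transpose P ** g x ** P = eta"
    and "\<And>x. x \<in> U \<Longrightarrow> ginv g x $ 0 $ 0 < 0"
    and "\<And>x i. x \<in> U \<Longrightarrow> i \<noteq> 0 \<Longrightarrow> ginv g x $ i $ i > 0"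
    and "\<And>x i j. x \<in> U \<Longrightarrow> i \<noteq> 0 \<Longrightarrow> j \<noteq> 0 \<Longrightarrow> i \<noteq> j \<Longrightarrow> \<bar>qq g i j x\<bar> < 1"
    and "x \<in> U"
  shows "LK g x = LGamma g x
      - (\<Sum>mu\<in>UNIV. \<Sum>nu\<in>-{mu}.
           pd mu (\<lambda>y. alpha g mu nu y * pd nu (\<lambda>z. sqrt \<bar>gam2 g mu nu z\<bar>) y) x)
      + (\<Sum>mu\<in>UNIV. \<Sum>nu\<in>UNIV. pd mu (\<lambda>y. sqrtg g y *
           (\<Sum>sig\<in>UNIV. xi mu * nvec g mu sig y * nvec g mu nu y * Chr g mu nu sig y
                        - xi nu * nvec g nu sig y * nvec g nu mu y * Chr g nu nu sig y)) x)
    \<and> LGamma g x = sqrtg g x * Rscal g x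
      - (\<Sum>mu\<in>UNIV. pd mu (\<lambda>y. sqrtg g y *
           (\<Sum>nu\<in>UNIV. \<Sum>sig\<in>UNIV. Chr g mu nu sig y * ginv g y $ nu $ sig
                                    - Chr g nu nu sig y * ginv g y $ sig $ mu)) x)"
proof -
  interpret lorentzian_chart g U
    by unfold_locales (fact assms)+
  show ?thesis
    using LK_eq_LGamma_plus_divergences[OF assms(8)] LGamma_eq_sqrtg_Rscal_minus_divergence[OF assms(8)]
    unfolding normal_current_def gamma_current_def by simp
qed

end
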